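(* Let $\gamma\in(0,1)$ and let $m$ be a positive integer. There exist a positive integer $D_0$ and a family $\tilde\Theta=\{\tilde\theta(a)\}_{a\in A}$, each $f(\cdot,\tilde\theta(a))$ a residual network of size $(d,(6^{\alpha}+1)m,D_0,\alpha+1)$, such that $$\tilde{\mathcal R}_{\mathcal D}(\tilde\Theta)\le\frac{32}{(1-\gamma)^2}(|A|+1)(|A|^4+1)\frac{\|r\|_{\mathcal B}^2}{m}$$ and $\|\tilde\Theta\|_{\mathcal P}\le\frac{12}{1-\gamma}\big(|A|^{7/2}+|A|^{1/2}\big)\|r\|_{\mathcal B}$.
   Context: Residual networks: for positive integers $d,m,D,L$, a residual network of size $(d,m,D,L)$ is a function $f(\cdot,\theta):\mathbb R^d\to\mathbb R$, $f(x,\theta)=u^{\top}h^{[L]}$, where $h^{[0]}=Vx$ and $h^{[l]}=h^{[l-1]}+U^{[l]}\sigma(W^{[l]}h^{[l-1]})$ for $l=1,\dots,L$, with $V\in\mathbb R^{D\times d}$, $W^{[l]}\in\mathbb R^{m\times D}$, $U^{[l]}\in\mathbb R^{D\times m}$, $u\in\mathbb R^D$, $\sigma(z)=\max(z,0)$ applied entrywise, and $\theta=(u,V,\{W^{[l]}\}_{l=1}^L,\{U^{[l]}\}_{l=1}^L)$. Its weighted path norm is $\|\theta\|_{\mathcal P}=\big\||u|^{\top}(I+3|U^{[L]}||W^{[L]}|)\cdots(I+3|U^{[1]}||W^{[1]}|)|V|\big\|_1$, where $|\cdot|$ of a matrix/vector is entrywise absolute value and $I$ is the $D\times D$ identity.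 For a family $\Theta=\{\theta(a)\}_{a\in A}$ of parameters (one network per action, all of the same size), $f(s,\theta(a))$ denotes the $a$-th network and $\|\Theta\|_{\mathcal P}=\sum_{a\in A}\|\theta(a)\|_{\mathcal P}$. Barron space: for a compact $S\subset\mathbb R^d$, $h:S\to\mathbb R$ is in the Barron space $\mathcal B(S)$ if there is a probability measure $\rho$ on $\mathbb R\times\mathbb R^d$ with $h(x)=\mathbb E_{(u,w)\sim\rho}[u\,\sigma(w^{\top}x)]$ for all $x\in S$; its Barron norm is $\|h\|_{\mathcal B}=\inf_\rho(\mathbb E_{\rho}[u^2\|w\|_1^2])^{1/2}$, the infimum over all such $\rho$. For $r:S\times A\to\mathbb R$ with each $r(\cdot,a)\in\mathcal B(S)$, $\|r\|_{\mathcal B}=(\sum_{a\in A}\|r(\cdot,a)\|_{\mathcal B}^2)^{1/2}$. Setting: $S\subseteq[0,1]^d$ is compact with positive Lebesgue measure; $\mathcal D$ is the uniform distribution on $S$ and $\mathcal U$ the uniform distribution on $A$; $A=\{1,\dots,2^{\alpha}\}$ with $\alpha\ge0$ an integer; $r:S\times A\to\mathbb R$ with each $r(\cdot,a)$ continuous, in $\mathcal B(S)$, and $|r(s,a)|\le1$. The Bellman effective loss is $\tilde{\mathcal R}_{\mathcal D}(\Theta)=\frac12\mathbb E_{s\sim\mathcal D,a\sim\mathcal U}\big(f(s,\theta(a))-r(s,a)-\gamma\max_{a'\in A}f(s,\theta(a'))\big)^2$. *)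

theory Defs
  imports "HOL-Probability.Probability"
begin

text \<open>Vectors/matrices are functions on natural-number indices; only the entries
  within the size (d, m, D, L) are ever used. Input space is real^'d, d = CARD('d).\<close>

datatype 'd resnet = ResNet
  (out_w: "nat \<Rightarrow> real")               \<comment> \<open>u, entries i < D\<close>
  (in_w: "nat \<Rightarrow> 'd \<Rightarrow> real")          \<comment> \<open>V, D x d\<close>
  (W_w: "nat \<Rightarrow> nat \<Rightarrow> nat \<Rightarrow> real")   \<comment> \<open>W^[l] k j, m x D, l = 1..L\<close>
  (U_w: "nat \<Rightarrow> nat \<Rightarrow> nat \<Rightarrow> real")   \<comment> \<open>U^[l] i k, D x m, l = 1..L\<close>

definition relu :: "real \<Rightarrow> real" where "relu z = max z 0"

fun hidden :: "nat \<Rightarrow> nat \<Rightarrow> 'd::finite resnet \<Rightarrow> real^'d \<Rightarrow> nat \<Rightarrow> nat \<Rightarrow> real" where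
  "hidden m D \<theta> x 0 = (\<lambda>i. \<Sum>j\<in>UNIV. in_w \<theta> i j * x $ j)"
| "hidden m D \<theta> x (Suc l) =
     (\<lambda>i. hidden m D \<theta> x l i
          + (\<Sum>k<m. U_w \<theta> (Suc l) i k * relu (\<Sum>j<D. W_w \<theta> (Suc l) k j * hidden m D \<theta> x l j)))"

definition resnet_eval :: "nat \<Rightarrow> nat \<Rightarrow> nat \<Rightarrow> 'd::finite resnet \<Rightarrow> real^'d \<Rightarrow> real" where
  "resnet_eval m D L \<theta> x = (\<Sum>i<D. out_w \<theta> i * hidden m D \<theta> x L i)"

text \<open>Row vector |u|^T (I+3|U^[L]||W^[L]|) ... (I+3|U^[L-n+1]||W^[L-n+1]|)\<close>
fun path_row :: "nat \<Rightarrow> nat \<Rightarrow> nat \<Rightarrow> 'd resnet \<Rightarrow> nat \<Rightarrow> nat \<Rightarrow> real" where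
  "path_row m D L \<theta> 0 = (\<lambda>i. \<bar>out_w \<theta> i\<bar>)"
| "path_row m D L \<theta> (Suc n) =
     (\<lambda>j. path_row m D L \<theta> n j
          + 3 * (\<Sum>i<D. path_row m D L \<theta> n i *
                   (\<Sum>k<m. \<bar>U_w \<theta> (L - n) i k\<bar> * \<bar>W_w \<theta> (L - n) k j\<bar>)))"

definition path_norm :: "nat \<Rightarrow> nat \<Rightarrow> nat \<Rightarrow> 'd::finite resnet \<Rightarrow> real" where
  "path_norm m D L \<theta> = (\<Sum>j\<in>UNIV. \<bar>\<Sum>i<D. path_row m D L \<theta> L i * \<bar>in_w \<theta> i j\<bar>\<bar>)"

definition l1norm :: "real^'d::finite \<Rightarrow> real" where
  "l1norm w = (\<Sum>j\<in>UNIV. \<bar>w $ j\<bar>)"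

definition barron_reps :: "(real^'d::finite) set \<Rightarrow> (real^'d \<Rightarrow> real) \<Rightarrow> (real \<times> (real^'d)) measure set" where
  "barron_reps S h = {\<rho>. prob_space \<rho> \<and> sets \<rho> = sets borel \<and>
     (\<forall>x\<in>S. integrable \<rho> (\<lambda>(u, w). u * relu (w \<bullet> x)) \<and>
             h x = (\<integral>(u, w). u * relu (w \<bullet> x) \<partial>\<rho>))}"

definition in_barron :: "(real^'d::finite) set \<Rightarrow> (real^'d \<Rightarrow> real) \<Rightarrow> bool" where
  "in_barron S h \<longleftrightarrow> barron_reps S h \<noteq> {}"

definition enn_sqrt :: "ennreal \<Rightarrow> ennreal" where
  "enn_sqrt x = (if x = \<infinity> then \<infinity> else ennreal (sqrt (enn2real x)))"

definition barron_norm :: "(real^'d::finite) set \<Rightarrow> (real^'d \<Rightarrow> real) \<Rightarrow> ennreal" where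
  "barron_norm S h = (INF \<rho>\<in>barron_reps S h.
      enn_sqrt (\<integral>\<^sup>+ (u, w). ennreal (u\<^sup>2 * (l1norm w)\<^sup>2) \<partial>\<rho>))"

definition barron_norm_family :: "(real^'d::finite) set \<Rightarrow> nat set \<Rightarrow> (real^'d \<Rightarrow> nat \<Rightarrow> real) \<Rightarrow> ennreal" where
  "barron_norm_family S A r = enn_sqrt (\<Sum>a\<in>A. (barron_norm S (\<lambda>s. r s a))\<^sup>2)"

definition bellman_loss ::
  "(real^'d::finite) set \<Rightarrow> nat set \<Rightarrow> real \<Rightarrow> nat \<Rightarrow> nat \<Rightarrow> nat \<Rightarrow>
   (real^'d \<Rightarrow> nat \<Rightarrow> real) \<Rightarrow> (nat \<Rightarrow> 'd resnet) \<Rightarrow> real" where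
  "bellman_loss S A \<gamma> m D L r \<Theta> =
     1/2 * (\<integral>s. (1 / real (card A)) *
        (\<Sum>a\<in>A. (resnet_eval m D L (\<Theta> a) s - r s a
                   - \<gamma> * Max ((\<lambda>a'. resnet_eval m D L (\<Theta> a') s) ` A))\<^sup>2)
       \<partial>(uniform_measure lborel S))"

end

theory Submission
  imports Defs
begin

text \<open>
  Each reward \<open>r (\<cdot>) a\<close> is a Barron function, i.e. an expectation of neurons \<open>u relu (w \<bullet> x)\<close>
  under a measure with \<open>E[u^2 |w|\<^sub>1^2]\<close> close to its squared Barron norm. Maurey's sampling
  argument, run greedily one neuron at a time and with the cost \<open>|u| |w|\<^sub>1\<close> added to the squared
  error, yields \<open>m\<close> neurons whose average \<open>g a\<close> approximates \<open>r (\<cdot>) a\<close> in \<open>L^2\<close> with error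
  \<open>O(1/m)\<close> and with bounded average cost.

  One residual network computes all \<open>g a\<close> in its first layer and then, in \<open>\<alpha>\<close> further layers,
  their maximum by a tournament based on \<open>max x y = x + relu (y - x)\<close>. Reading out
  \<open>g a + \<gamma>/(1-\<gamma>) max\<^sub>b g b\<close> for action \<open>a\<close>, the maxima cancel in the Bellman residual, which
  becomes \<open>g a - r (\<cdot>) a\<close>; so the Bellman loss is the mean approximation error. Only \<open>2^\<alpha> m\<close>
  of the \<open>(6^\<alpha> + 1) m\<close> neurons per layer are used.
\<close>

section \<open>Averages of neurons approximating Barron functions\<close>

definition neuron :: "real \<times> (real^'d::finite) \<Rightarrow> real^'d \<Rightarrow> real" where
  "neuron \<omega> x = fst \<omega> * relu (snd \<omega> \<bullet> x)"

definition neuron_cost :: "real \<times> (real^'d::finite) \<Rightarrow> real" where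
  "neuron_cost \<omega> = \<bar>fst \<omega>\<bar> * l1norm (snd \<omega>)"

lemma case_prod_neuron: "(\<lambda>(u, w). u * relu (w \<bullet> x)) = (\<lambda>\<omega>. neuron \<omega> x)"
  by (auto simp: neuron_def)

lemma case_prod_neuron_cost:
  "(\<lambda>(u, w). ennreal (u\<^sup>2 * (l1norm w)\<^sup>2)) = (\<lambda>\<omega>. ennreal ((neuron_cost \<omega>)\<^sup>2))"
  by (auto simp: neuron_cost_def power_mult_distrib)

lemma l1norm_nonneg [simp]: "0 \<le> l1norm w"
  by (simp add: l1norm_def sum_nonneg)

lemma neuron_cost_nonneg [simp]: "0 \<le> neuron_cost \<omega>"
  by (simp add: neuron_cost_def)

lemma borel_measurable_neuron_pair [measurable]:
  "(\<lambda>p. neuron (fst p) (snd p :: real^'d::finite)) \<in> borel_measurable (borel \<Otimes>\<^sub>M borel)"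
  unfolding borel_prod neuron_def
  by (intro borel_measurable_continuous_onI) (auto simp: relu_def intro!: continuous_intros)

lemma borel_measurable_neuron [measurable]:
  "(\<lambda>\<omega>. neuron \<omega> (x::real^'d::finite)) \<in> borel_measurable borel"
  "neuron \<omega> \<in> borel_measurable (borel :: (real^'d::finite) measure)"
  unfolding neuron_def
  by (intro borel_measurable_continuous_onI; auto simp: relu_def intro!: continuous_intros)+

lemma borel_measurable_neuron_cost [measurable]:
  "(neuron_cost :: real \<times> (real^'d::finite) \<Rightarrow> real) \<in> borel_measurable borel"
  unfolding neuron_cost_def l1norm_def
  by (intro borel_measurable_continuous_onI) (auto intro!: continuous_intros)

lemma abs_inner_le_l1norm:
  fixes w x :: "real^'d::finite"
  assumes "\<forall>i. 0 \<le> x $ i \<and> x $ i \<le> 1"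
  shows "\<bar>w \<bullet> x\<bar> \<le> l1norm w"
proof -
  have "\<bar>w \<bullet> x\<bar> \<le> (\<Sum>j\<in>UNIV. \<bar>w $ j * x $ j\<bar>)"
    unfolding inner_vec_def by (simp add: sum_abs)
  also have "\<dots> \<le> (\<Sum>j\<in>UNIV. \<bar>w $ j\<bar>)"
    using assms by (intro sum_mono) (simp add: abs_mult mult_left_le)
  finally show ?thesis by (simp add: l1norm_def)
qed

lemma abs_neuron_le_cost:
  assumes "\<forall>i. 0 \<le> x $ i \<and> x $ i \<le> 1"
  shows "\<bar>neuron \<omega> x\<bar> \<le> neuron_cost \<omega>"
proof -
  have "\<bar>relu (snd \<omega> \<bullet> x)\<bar> \<le> l1norm (snd \<omega>)"
    using abs_inner_le_l1norm[OF assms, of "snd \<omega>"] by (auto simp: relu_def)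
  then show ?thesis
    by (simp add: neuron_def neuron_cost_def abs_mult mult_left_mono)
qed

lemma (in prob_space) integral_square_shift:
  fixes f :: "'a \<Rightarrow> real"
  assumes "integrable M f" "integrable M (\<lambda>\<omega>. (f \<omega>)\<^sup>2)"
  shows "(\<integral>\<omega>. (c + f \<omega>)\<^sup>2 \<partial>M) = c\<^sup>2 + 2 * c * expectation f + (\<integral>\<omega>. (f \<omega>)\<^sup>2 \<partial>M)"
proof -
  have "(\<lambda>\<omega>. (c + f \<omega>)\<^sup>2) = (\<lambda>\<omega>. c\<^sup>2 + 2 * c * f \<omega> + (f \<omega>)\<^sup>2)"
    by (simp add: power2_eq_square algebra_simps)
  then show ?thesis
    using assms by (simp add: prob_space)
qed

context
  fixes \<rho> :: "(real \<times> (real^'d::finite)) measure" and x :: "real^'d" and M :: real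
  assumes \<rho>: "prob_space \<rho>" "sets \<rho> = sets borel"
    and x: "\<forall>i. 0 \<le> x $ i \<and> x $ i \<le> 1"
    and moment: "(\<integral>\<^sup>+\<omega>. ennreal ((neuron_cost \<omega>)\<^sup>2) \<partial>\<rho>) = ennreal M" and M: "0 \<le> M"
begin

lemma neuron_second_moment:
  shows "integrable \<rho> (\<lambda>\<omega>. (neuron \<omega> x)\<^sup>2)" and "(\<integral>\<omega>. (neuron \<omega> x)\<^sup>2 \<partial>\<rho>) \<le> M"
proof -
  have meas [measurable]: "neuron_cost \<in> borel_measurable \<rho>" "(\<lambda>\<omega>. neuron \<omega> x) \<in> borel_measurable \<rho>"
    using \<rho>(2) by (simp_all cong: measurable_cong_sets)
  have cost_int: "integrable \<rho> (\<lambda>\<omega>. (neuron_cost \<omega>)\<^sup>2)"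
    using moment by (intro integrableI_nonneg) auto
  have le: "(neuron \<omega> x)\<^sup>2 \<le> (neuron_cost \<omega>)\<^sup>2" for \<omega>
    using abs_neuron_le_cost[OF x, of \<omega>] by (metis power2_abs power_mono abs_ge_zero)
  show int: "integrable \<rho> (\<lambda>\<omega>. (neuron \<omega> x)\<^sup>2)"
    by (rule Bochner_Integration.integrable_bound[OF cost_int]) (auto intro!: AE_I2 le)
  have "(\<integral>\<omega>. (neuron_cost \<omega>)\<^sup>2 \<partial>\<rho>) = M"
    using nn_integral_eq_integral[OF cost_int] moment M by (simp add: integral_nonneg_AE)
  then show "(\<integral>\<omega>. (neuron \<omega> x)\<^sup>2 \<partial>\<rho>) \<le> M"
    using integral_mono[OF int cost_int le] by simp
qed

lemma neuron_mean_sq_le: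
  assumes "integrable \<rho> (\<lambda>\<omega>. neuron \<omega> x)"
  shows "(\<integral>\<omega>. neuron \<omega> x \<partial>\<rho>)\<^sup>2 \<le> M"
proof -
  interpret prob_space \<rho> by (fact \<rho>)
  let ?h = "\<integral>\<omega>. neuron \<omega> x \<partial>\<rho>"
  have "0 \<le> (\<integral>\<omega>. (- ?h + neuron \<omega> x)\<^sup>2 \<partial>\<rho>)"
    by simp
  also have "\<dots> = (- ?h)\<^sup>2 + 2 * (- ?h) * ?h + (\<integral>\<omega>. (neuron \<omega> x)\<^sup>2 \<partial>\<rho>)"
    by (rule integral_square_shift[OF assms neuron_second_moment(1)])
  finally show ?thesis
    using neuron_second_moment(2) by (simp add: power2_eq_square)
qed

lemma neuron_sample_sq_error:
  assumes "integrable \<rho> (\<lambda>\<omega>. neuron \<omega> x)"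
  shows "(\<integral>\<^sup>+\<omega>. ennreal ((c + neuron \<omega> x - (\<integral>\<omega>. neuron \<omega> x \<partial>\<rho>))\<^sup>2) \<partial>\<rho>) \<le> ennreal (c\<^sup>2 + M)"
proof -
  interpret prob_space \<rho> by (fact \<rho>)
  let ?h = "\<integral>\<omega>. neuron \<omega> x \<partial>\<rho>"
  have sq: "(c + neuron \<omega> x - ?h)\<^sup>2 = (c - ?h + neuron \<omega> x)\<^sup>2" for \<omega>
    by (simp add: algebra_simps)
  have int: "integrable \<rho> (\<lambda>\<omega>. (c - ?h + neuron \<omega> x)\<^sup>2)"
    using assms neuron_second_moment(1) by (simp add: power2_sum)
  have "(\<integral>\<^sup>+\<omega>. ennreal ((c + neuron \<omega> x - ?h)\<^sup>2) \<partial>\<rho>)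
      = ennreal (\<integral>\<omega>. (c - ?h + neuron \<omega> x)\<^sup>2 \<partial>\<rho>)"
    unfolding sq by (rule nn_integral_eq_integral[OF int]) simp
  also have "(\<integral>\<omega>. (c - ?h + neuron \<omega> x)\<^sup>2 \<partial>\<rho>)
      = (c - ?h)\<^sup>2 + 2 * (c - ?h) * ?h + (\<integral>\<omega>. (neuron \<omega> x)\<^sup>2 \<partial>\<rho>)"
    by (rule integral_square_shift[OF assms neuron_second_moment(1)])
  also have "\<dots> \<le> c\<^sup>2 + M"
    using neuron_second_moment(2) by (simp add: power2_eq_square algebra_simps add_increasing2)
  finally show ?thesis
    by (simp add: ennreal_leI)
qed

end

definition shallow_net :: "nat \<Rightarrow> (nat \<Rightarrow> real \<times> (real^'d::finite)) \<Rightarrow> real^'d \<Rightarrow> real" where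
  "shallow_net m \<omega>s x = (\<Sum>k<m. neuron (\<omega>s k) x) / real m"

definition shallow_cost :: "nat \<Rightarrow> (nat \<Rightarrow> real \<times> (real^'d::finite)) \<Rightarrow> real" where
  "shallow_cost m \<omega>s = (\<Sum>k<m. neuron_cost (\<omega>s k)) / real m"

lemma borel_measurable_shallow_net [measurable]:
  "shallow_net m \<omega>s \<in> borel_measurable (borel :: (real^'d::finite) measure)"
  unfolding shallow_net_def by measurable

lemma (in prob_space) nn_integral_less_imp_ex_less:
  assumes "(\<integral>\<^sup>+\<omega>. f \<omega> \<partial>M) < c"
  shows "\<exists>\<omega>\<in>space M. f \<omega> < c"
proof (rule ccontr)
  assume "\<not> ?thesis"
  then have "(\<integral>\<^sup>+\<omega>. c \<partial>M) \<le> (\<integral>\<^sup>+\<omega>. f \<omega> \<partial>M)"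
    by (intro nn_integral_mono) (auto simp: not_less)
  with assms show False
    by (simp add: emeasure_space_1)
qed

context
  fixes \<rho> :: "(real \<times> (real^'d::finite)) measure" and \<mu> :: "(real^'d) measure"
    and h :: "real^'d \<Rightarrow> real" and M N :: real
  assumes \<rho>: "prob_space \<rho>" "sets \<rho> = sets borel"
    and \<mu>: "prob_space \<mu>" "sets \<mu> = sets borel"
    and h_meas [measurable]: "h \<in> borel_measurable borel"
    and rep: "AE x in \<mu>. (\<forall>i. 0 \<le> x $ i \<and> x $ i \<le> 1) \<and> integrable \<rho> (\<lambda>\<omega>. neuron \<omega> x)
                \<and> h x = (\<integral>\<omega>. neuron \<omega> x \<partial>\<rho>)"
    and moment: "(\<integral>\<^sup>+\<omega>. ennreal ((neuron_cost \<omega>)\<^sup>2) \<partial>\<rho>) = ennreal M"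
    and M: "0 \<le> M" "M < N\<^sup>2" and N: "0 < N"
begin

\<comment> \<open>AM-GM: \<open>7 N t \<le> 7/2 t\<^sup>2 + 7/2 N\<^sup>2\<close>\<close>
lemma expected_weighted_neuron_cost:
  "(\<integral>\<^sup>+\<omega>. ennreal (7 * N * neuron_cost \<omega>) \<partial>\<rho>) \<le> ennreal (7/2 * M + 7/2 * N\<^sup>2)"
proof -
  interpret prob_space \<rho> by (fact \<rho>)
  have [measurable]: "neuron_cost \<in> borel_measurable \<rho>"
    using \<rho>(2) by (simp cong: measurable_cong_sets)
  have "7 * N * t \<le> 7/2 * t\<^sup>2 + 7/2 * N\<^sup>2" for t :: real
    using sum_squares_bound[of t N] by (simp add: power2_eq_square algebra_simps)
  then have "(\<integral>\<^sup>+\<omega>. ennreal (7 * N * neuron_cost \<omega>) \<partial>\<rho>)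
      \<le> (\<integral>\<^sup>+\<omega>. ennreal (7/2) * ennreal ((neuron_cost \<omega>)\<^sup>2) + ennreal (7/2 * N\<^sup>2) \<partial>\<rho>)"
    by (intro nn_integral_mono) (simp flip: ennreal_plus ennreal_mult)
  also have "\<dots> = ennreal (7/2) * ennreal M + ennreal (7/2 * N\<^sup>2)"
    by (simp add: nn_integral_add nn_integral_cmult moment emeasure_space_1)
  finally show ?thesis
    using M by (simp flip: ennreal_plus ennreal_mult)
qed

\<comment> \<open>Averaging over \<open>\<omega> \<sim> \<rho>\<close> (Fubini), the left-hand side has mean at most
  \<open>\<integral>R\<^sup>2 + 9/2 M + 7/2 N\<^sup>2 < \<integral>R\<^sup>2 + 8 N\<^sup>2\<close>; some \<open>\<omega>\<close> is below the mean.\<close>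
lemma greedy_neuron_step:
  assumes [measurable]: "R \<in> borel_measurable borel"
  shows "\<exists>\<omega>. (\<integral>\<^sup>+x. ennreal ((R x + neuron \<omega> x - h x)\<^sup>2) \<partial>\<mu>) + ennreal (7 * N * neuron_cost \<omega>)
           \<le> (\<integral>\<^sup>+x. ennreal ((R x)\<^sup>2) \<partial>\<mu>) + ennreal (8 * N\<^sup>2)"
proof -
  interpret \<rho>: prob_space \<rho> by (fact \<rho>)
  interpret \<mu>: prob_space \<mu> by (fact \<mu>)
  interpret pair_sigma_finite \<rho> \<mu> ..
  define A where "A = (\<integral>\<^sup>+x. ennreal ((R x)\<^sup>2) \<partial>\<mu>)"
  define G where "G \<omega> x = ennreal ((R x + neuron \<omega> x - h x)\<^sup>2) + ennreal (7 * N * neuron_cost \<omega>)" for \<omega> x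
  define K where "K = 9/2 * M + 7/2 * N\<^sup>2"
  show ?thesis
  proof (cases "A = \<infinity>")
    case True
    then show ?thesis
      by (intro exI[of _ 0]) (simp add: A_def neuron_def neuron_cost_def l1norm_def relu_def)
  next
    case False
    have meas_\<rho> [measurable]: "neuron_cost \<in> borel_measurable \<rho>" "(\<lambda>\<omega>. neuron \<omega> x) \<in> borel_measurable \<rho>" for x
      using \<rho>(2) by (simp_all cong: measurable_cong_sets)
    have meas_\<mu> [measurable]: "h \<in> borel_measurable \<mu>" "R \<in> borel_measurable \<mu>"
        "neuron \<omega> \<in> borel_measurable \<mu>" for \<omega>
      using \<mu>(2) by (simp_all cong: measurable_cong_sets)
    have "case_prod G \<in> borel_measurable (borel \<Otimes>\<^sub>M borel)"
      unfolding G_def by measurable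
    then have G_meas: "case_prod G \<in> borel_measurable (\<rho> \<Otimes>\<^sub>M \<mu>)"
      by (simp add: \<rho>(2) \<mu>(2) cong: measurable_cong_sets sets_pair_measure_cong)
    have inner: "AE x in \<mu>. (\<integral>\<^sup>+\<omega>. G \<omega> x \<partial>\<rho>) \<le> ennreal ((R x)\<^sup>2) + ennreal K"
      using rep
    proof eventually_elim
      case (elim x)
      then have "(\<integral>\<^sup>+\<omega>. G \<omega> x \<partial>\<rho>) \<le> ennreal ((R x)\<^sup>2 + M) + ennreal (7/2 * M + 7/2 * N\<^sup>2)"
        unfolding G_def
        using neuron_sample_sq_error[OF \<rho> _ moment M(1), of x "R x"] expected_weighted_neuron_cost
        by (subst nn_integral_add) (auto intro!: add_mono)
      also have "\<dots> = ennreal ((R x)\<^sup>2) + ennreal K"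
        using M by (simp add: K_def flip: ennreal_plus)
      finally show ?case .
    qed
    have "(\<integral>\<^sup>+\<omega>. (\<integral>\<^sup>+x. G \<omega> x \<partial>\<mu>) \<partial>\<rho>) = (\<integral>\<^sup>+x. (\<integral>\<^sup>+\<omega>. G \<omega> x \<partial>\<rho>) \<partial>\<mu>)"
      using Fubini'[OF G_meas] by simp
    also have "\<dots> \<le> (\<integral>\<^sup>+x. ennreal ((R x)\<^sup>2) + ennreal K \<partial>\<mu>)"
      by (rule nn_integral_mono_AE[OF inner])
    also have "\<dots> = A + ennreal K"
      by (simp add: A_def nn_integral_add \<mu>.emeasure_space_1)
    also have "\<dots> < A + ennreal (8 * N\<^sup>2)"
      using False M N by (simp add: K_def ennreal_add_left_cancel_less ennreal_lessI flip: ennreal_plus)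
    finally obtain \<omega> where "(\<integral>\<^sup>+x. G \<omega> x \<partial>\<mu>) < A + ennreal (8 * N\<^sup>2)"
      using \<rho>.nn_integral_less_imp_ex_less by blast
    moreover have "(\<integral>\<^sup>+x. G \<omega> x \<partial>\<mu>)
        = (\<integral>\<^sup>+x. ennreal ((R x + neuron \<omega> x - h x)\<^sup>2) \<partial>\<mu>) + ennreal (7 * N * neuron_cost \<omega>)"
      unfolding G_def by (simp add: nn_integral_add \<mu>.emeasure_space_1)
    ultimately show ?thesis
      unfolding A_def by (intro exI[of _ \<omega>]) simp
  qed
qed

lemma greedy_neurons:
  "\<exists>\<omega>s. (\<integral>\<^sup>+x. ennreal (((\<Sum>k<j. neuron (\<omega>s k) x) - real j * h x)\<^sup>2) \<partial>\<mu>)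
          + ennreal (7 * N * (\<Sum>k<j. neuron_cost (\<omega>s k))) \<le> ennreal (real j * 8 * N\<^sup>2)"
proof (induction j)
  case 0
  then show ?case by simp
next
  case (Suc j)
  then obtain \<omega>s where IH: "(\<integral>\<^sup>+x. ennreal (((\<Sum>k<j. neuron (\<omega>s k) x) - real j * h x)\<^sup>2) \<partial>\<mu>)
      + ennreal (7 * N * (\<Sum>k<j. neuron_cost (\<omega>s k))) \<le> ennreal (real j * 8 * N\<^sup>2)"
    by blast
  define R where "R x = (\<Sum>k<j. neuron (\<omega>s k) x) - real j * h x" for x
  have "R \<in> borel_measurable borel"
    unfolding R_def by measurable
  then obtain \<omega> where \<omega>: "(\<integral>\<^sup>+x. ennreal ((R x + neuron \<omega> x - h x)\<^sup>2) \<partial>\<mu>) + ennreal (7 * N * neuron_cost \<omega>)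
      \<le> (\<integral>\<^sup>+x. ennreal ((R x)\<^sup>2) \<partial>\<mu>) + ennreal (8 * N\<^sup>2)"
    using greedy_neuron_step by blast
  define \<omega>s' where "\<omega>s' = \<omega>s(j := \<omega>)"
  have sum_\<omega>s': "(\<Sum>k<j. f (\<omega>s' k)) = (\<Sum>k<j. f (\<omega>s k))" for f :: "_ \<Rightarrow> real"
    by (rule sum.cong) (auto simp: \<omega>s'_def)
  have cost_nonneg: "0 \<le> 7 * N * (\<Sum>k<j. neuron_cost (\<omega>s k))"
    using N by (simp add: sum_nonneg)
  have "(\<integral>\<^sup>+x. ennreal (((\<Sum>k<Suc j. neuron (\<omega>s' k) x) - real (Suc j) * h x)\<^sup>2) \<partial>\<mu>)
          + ennreal (7 * N * (\<Sum>k<Suc j. neuron_cost (\<omega>s' k)))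
      = ((\<integral>\<^sup>+x. ennreal ((R x + neuron \<omega> x - h x)\<^sup>2) \<partial>\<mu>) + ennreal (7 * N * neuron_cost \<omega>))
          + ennreal (7 * N * (\<Sum>k<j. neuron_cost (\<omega>s k)))"
    using N cost_nonneg by (simp add: sum_\<omega>s' R_def \<omega>s'_def algebra_simps flip: ennreal_plus)
  also have "\<dots> \<le> ((\<integral>\<^sup>+x. ennreal ((R x)\<^sup>2) \<partial>\<mu>) + ennreal (7 * N * (\<Sum>k<j. neuron_cost (\<omega>s k))))
          + ennreal (8 * N\<^sup>2)"
    using \<omega> by (simp add: algebra_simps add_left_mono)
  also have "\<dots> \<le> ennreal (real j * 8 * N\<^sup>2) + ennreal (8 * N\<^sup>2)"
    using IH unfolding R_def by (rule add_right_mono)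
  also have "\<dots> = ennreal (real (Suc j) * 8 * N\<^sup>2)"
    by (simp add: algebra_simps flip: ennreal_plus)
  finally show ?case by blast
qed

lemma maurey_approximation:
  assumes m: "0 < m"
  shows "\<exists>\<omega>s. (\<integral>\<^sup>+x. ennreal ((shallow_net m \<omega>s x - h x)\<^sup>2) \<partial>\<mu>) \<le> ennreal (8 * N\<^sup>2 / real m)
              \<and> shallow_cost m \<omega>s \<le> 8 * N / 7"
proof -
  obtain \<omega>s where \<omega>s: "(\<integral>\<^sup>+x. ennreal (((\<Sum>k<m. neuron (\<omega>s k) x) - real m * h x)\<^sup>2) \<partial>\<mu>)
      + ennreal (7 * N * (\<Sum>k<m. neuron_cost (\<omega>s k))) \<le> ennreal (real m * 8 * N\<^sup>2)"
    using greedy_neurons by blast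
  have sq: "(shallow_net m \<omega>s x - h x)\<^sup>2 = 1 / (real m)\<^sup>2 * ((\<Sum>k<m. neuron (\<omega>s k) x) - real m * h x)\<^sup>2" for x
    using m by (simp add: shallow_net_def field_simps)
  have "(\<integral>\<^sup>+x. ennreal ((shallow_net m \<omega>s x - h x)\<^sup>2) \<partial>\<mu>)
      = (\<integral>\<^sup>+x. ennreal (1 / (real m)\<^sup>2) * ennreal (((\<Sum>k<m. neuron (\<omega>s k) x) - real m * h x)\<^sup>2) \<partial>\<mu>)"
    unfolding sq by (simp flip: ennreal_mult')
  also have "\<dots> = ennreal (1 / (real m)\<^sup>2) * (\<integral>\<^sup>+x. ennreal (((\<Sum>k<m. neuron (\<omega>s k) x) - real m * h x)\<^sup>2) \<partial>\<mu>)"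
    by (rule nn_integral_cmult) (simp add: measurable_cong_sets[OF \<mu>(2) refl])
  also have "\<dots> \<le> ennreal (1 / (real m)\<^sup>2) * ennreal (real m * 8 * N\<^sup>2)"
    using \<omega>s by (intro mult_left_mono) (auto intro: order_trans[OF add_increasing2[OF zero_le]])
  also have "\<dots> = ennreal (1 / (real m)\<^sup>2 * (real m * 8 * N\<^sup>2))"
    by (simp flip: ennreal_mult')
  also have "1 / (real m)\<^sup>2 * (real m * 8 * N\<^sup>2) = 8 * N\<^sup>2 / real m"
    using m by (simp add: power2_eq_square)
  finally have err: "(\<integral>\<^sup>+x. ennreal ((shallow_net m \<omega>s x - h x)\<^sup>2) \<partial>\<mu>) \<le> ennreal (8 * N\<^sup>2 / real m)" .
  have "ennreal (7 * N * (\<Sum>k<m. neuron_cost (\<omega>s k))) \<le> ennreal (real m * 8 * N\<^sup>2)"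
    by (rule order_trans[OF add_increasing[OF zero_le order_refl] \<omega>s])
  then have "7 * N * (\<Sum>k<m. neuron_cost (\<omega>s k)) \<le> real m * 8 * N\<^sup>2"
    using N by (simp add: ennreal_le_iff)
  then have "shallow_cost m \<omega>s \<le> 8 * N / 7"
    using m N by (simp add: shallow_cost_def field_simps power2_eq_square)
  with err show ?thesis by blast
qed

end

lemma barron_norm_less_imp_rep:
  assumes "barron_norm S h < ennreal N"
  shows "\<exists>\<rho>\<in>barron_reps S h. \<exists>M. 0 \<le> M \<and> M < N\<^sup>2
           \<and> (\<integral>\<^sup>+\<omega>. ennreal ((neuron_cost \<omega>)\<^sup>2) \<partial>\<rho>) = ennreal M"
proof -
  obtain \<rho> where \<rho>: "\<rho> \<in> barron_reps S h"
    and less: "enn_sqrt (\<integral>\<^sup>+\<omega>. ennreal ((neuron_cost \<omega>)\<^sup>2) \<partial>\<rho>) < ennreal N"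
    using assms unfolding barron_norm_def case_prod_neuron_cost by (auto simp: INF_less_iff)
  define M where "M = enn2real (\<integral>\<^sup>+\<omega>. ennreal ((neuron_cost \<omega>)\<^sup>2) \<partial>\<rho>)"
  have moment: "(\<integral>\<^sup>+\<omega>. ennreal ((neuron_cost \<omega>)\<^sup>2) \<partial>\<rho>) = ennreal M"
    using less by (auto simp: M_def enn_sqrt_def ennreal_enn2real_if)
  have M: "0 \<le> M"
    by (simp add: M_def)
  have "sqrt M < N"
    using less M by (simp add: moment enn_sqrt_def ennreal_less_iff)
  then have "(sqrt M)\<^sup>2 < N\<^sup>2"
    using M by (intro power_strict_mono) auto
  with \<rho> moment show ?thesis
    using M by auto
qed

lemma barron_repsD:
  assumes "\<rho> \<in> barron_reps S h"
  shows "prob_space \<rho>" "sets \<rho> = sets borel"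
    and "x \<in> S \<Longrightarrow> integrable \<rho> (\<lambda>\<omega>. neuron \<omega> x)"
    and "x \<in> S \<Longrightarrow> h x = (\<integral>\<omega>. neuron \<omega> x \<partial>\<rho>)"
  using assms by (auto simp: barron_reps_def case_prod_neuron)

lemma barron_norm_zero_imp_vanish:
  assumes "barron_norm S h = 0" "S \<subseteq> {x. \<forall>i. 0 \<le> x $ i \<and> x $ i \<le> 1}" "x \<in> S"
  shows "h x = 0"
proof (rule ccontr)
  assume "h x \<noteq> 0"
  then obtain \<rho> M where \<rho>: "\<rho> \<in> barron_reps S h" and M: "0 \<le> M" "M < \<bar>h x\<bar>\<^sup>2"
    and moment: "(\<integral>\<^sup>+\<omega>. ennreal ((neuron_cost \<omega>)\<^sup>2) \<partial>\<rho>) = ennreal M"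
    using barron_norm_less_imp_rep[of S h "\<bar>h x\<bar>"] assms(1) by auto
  have "(h x)\<^sup>2 \<le> M"
    using neuron_mean_sq_le[OF barron_repsD(1,2)[OF \<rho>] _ moment M(1)] barron_repsD(3,4)[OF \<rho> assms(3)] assms(2,3)
    by auto
  with M show False
    by simp
qed

lemma barron_shallow_approximation:
  fixes \<mu> :: "(real^'d::finite) measure"
  assumes \<mu>: "prob_space \<mu>" "sets \<mu> = sets borel" "AE x in \<mu>. x \<in> S"
    and S: "S \<subseteq> {x. \<forall>i. 0 \<le> x $ i \<and> x $ i \<le> 1}"
    and g: "g \<in> borel_measurable borel" "\<forall>x\<in>S. g x = h x"
    and N: "barron_norm S h \<le> ennreal N" "N = 0 \<or> barron_norm S h < ennreal N"
    and m: "0 < m"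
  shows "\<exists>\<omega>s. (\<integral>\<^sup>+x. ennreal ((shallow_net m \<omega>s x - g x)\<^sup>2) \<partial>\<mu>) \<le> ennreal (8 * N\<^sup>2 / real m)
              \<and> shallow_cost m \<omega>s \<le> 8 * N / 7"
  using N(2)
proof
  assume "N = 0"
  then have zero: "barron_norm S h = 0"
    using N(1) by simp
  have "AE x in \<mu>. g x = 0"
    using \<mu>(3) by eventually_elim (use zero g(2) S barron_norm_zero_imp_vanish in auto)
  then have "(\<integral>\<^sup>+x. ennreal ((shallow_net m (\<lambda>_. 0) x - g x)\<^sup>2) \<partial>\<mu>) = (\<integral>\<^sup>+x. 0 \<partial>\<mu>)"
    by (intro nn_integral_cong_AE) (auto simp: shallow_net_def neuron_def relu_def elim!: eventually_mono)
  then show ?thesis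
    by (intro exI[of _ "\<lambda>_. 0"]) (simp add: \<open>N = 0\<close> shallow_cost_def neuron_cost_def l1norm_def)
next
  assume "barron_norm S h < ennreal N"
  then obtain \<rho> M where \<rho>: "\<rho> \<in> barron_reps S h" and M: "0 \<le> M" "M < N\<^sup>2"
    and moment: "(\<integral>\<^sup>+\<omega>. ennreal ((neuron_cost \<omega>)\<^sup>2) \<partial>\<rho>) = ennreal M"
    using barron_norm_less_imp_rep by blast
  have "0 < ennreal N"
    using \<open>barron_norm S h < ennreal N\<close> by (rule le_less_trans[OF zero_le])
  then have "0 < N"
    by simp
  have "AE x in \<mu>. (\<forall>i. 0 \<le> x $ i \<and> x $ i \<le> 1) \<and> integrable \<rho> (\<lambda>\<omega>. neuron \<omega> x)
          \<and> g x = (\<integral>\<omega>. neuron \<omega> x \<partial>\<rho>)"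
    using \<mu>(3) by eventually_elim (use S g(2) barron_repsD[OF \<rho>] in auto)
  then show ?thesis
    using maurey_approximation[OF barron_repsD(1,2)[OF \<rho>] \<mu>(1,2) g(1) _ moment M \<open>0 < N\<close> m] by blast
qed

lemma shallow_approximations:
  fixes \<mu> :: "(real^'d::finite) measure" and h g :: "nat \<Rightarrow> real^'d \<Rightarrow> real"
  assumes \<mu>: "prob_space \<mu>" "sets \<mu> = sets borel" "AE x in \<mu>. x \<in> S"
    and S: "S \<subseteq> {x. \<forall>i. 0 \<le> x $ i \<and> x $ i \<le> 1}"
    and g: "\<forall>b<n. g b \<in> borel_measurable borel \<and> (\<forall>x\<in>S. g b x = h b x)"
    and B: "\<forall>b<n. barron_norm S (h b) = ennreal (B b)" "\<forall>b. 0 \<le> B b"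
    and \<epsilon>: "0 \<le> \<epsilon>" "\<epsilon> = 0 \<Longrightarrow> \<forall>b<n. B b = 0"
    and m: "0 < m"
  shows "\<exists>\<omega>s. \<forall>b<n. (\<integral>\<^sup>+x. ennreal ((shallow_net m (\<omega>s b) x - g b x)\<^sup>2) \<partial>\<mu>) \<le> ennreal (8 * (B b + \<epsilon>)\<^sup>2 / real m)
      \<and> shallow_cost m (\<omega>s b) \<le> 8 * (B b + \<epsilon>) / 7"
proof -
  have "\<exists>\<omega>s. (\<integral>\<^sup>+x. ennreal ((shallow_net m \<omega>s x - g b x)\<^sup>2) \<partial>\<mu>) \<le> ennreal (8 * (B b + \<epsilon>)\<^sup>2 / real m)
      \<and> shallow_cost m \<omega>s \<le> 8 * (B b + \<epsilon>) / 7" if b: "b < n" for b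
  proof (rule barron_shallow_approximation[OF \<mu> S _ _ _ _ m])
    show "g b \<in> borel_measurable borel" "\<forall>x\<in>S. g b x = h b x"
      using g b by auto
    show "barron_norm S (h b) \<le> ennreal (B b + \<epsilon>)"
      using B b \<epsilon>(1) by (simp add: ennreal_leI)
    show "B b + \<epsilon> = 0 \<or> barron_norm S (h b) < ennreal (B b + \<epsilon>)"
    proof (cases "\<epsilon> = 0")
      case True
      then show ?thesis
        using \<epsilon>(2) b by simp
    next
      case False
      then have "0 < \<epsilon>"
        using \<epsilon>(1) by simp
      then have "ennreal (B b) < ennreal (B b + \<epsilon>)"
        using B(2) by (intro ennreal_lessI) (auto intro: add_nonneg_pos)
      then show ?thesis
        using B(1) b by simp
    qed
  qed
  then have "\<forall>b\<in>{..<n}. \<exists>\<omega>s. (\<integral>\<^sup>+x. ennreal ((shallow_net m \<omega>s x - g b x)\<^sup>2) \<partial>\<mu>) \<le> ennreal (8 * (B b + \<epsilon>)\<^sup>2 / real m)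
      \<and> shallow_cost m \<omega>s \<le> 8 * (B b + \<epsilon>) / 7"
    by blast
  from bchoice[OF this] obtain \<omega>s where "\<forall>b\<in>{..<n}. (\<integral>\<^sup>+x. ennreal ((shallow_net m (\<omega>s b) x - g b x)\<^sup>2) \<partial>\<mu>) \<le> ennreal (8 * (B b + \<epsilon>)\<^sup>2 / real m)
      \<and> shallow_cost m (\<omega>s b) \<le> 8 * (B b + \<epsilon>) / 7"
    by blast
  then show ?thesis
    by auto
qed

lemma sum_lessThan_mult_div_mod:
  fixes F :: "nat \<Rightarrow> nat \<Rightarrow> 'a::comm_monoid_add"
  shows "(\<Sum>k<n * m. F (k div m) (k mod m)) = (\<Sum>b<n. \<Sum>j<m. F b j)"
proof -
  have "(\<Sum>k<n * m. F (k div m) (k mod m)) = (\<Sum>b<n. \<Sum>k\<in>{b * m..<b * m + m}. F (k div m) (k mod m))"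
    by (rule sum.nat_group[symmetric])
  also have "\<dots> = (\<Sum>b<n. \<Sum>j<m. F b j)"
  proof (rule sum.cong[OF refl])
    fix b
    have "k div m = b \<and> k mod m = k - b * m" if k: "k \<in> {b * m..<b * m + m}" for k
    proof -
      obtain j where "k = b * m + j" "j < m"
        using k by (intro that[of "k - b * m"]) auto
      then show ?thesis
        by (simp add: div_nat_eqI)
    qed
    then show "(\<Sum>k\<in>{b * m..<b * m + m}. F (k div m) (k mod m)) = (\<Sum>j<m. F b j)"
      by (intro sum.reindex_bij_witness[where i="\<lambda>j. b * m + j" and j="\<lambda>k. k - b * m"]) auto
  qed
  finally show ?thesis .
qed

lemma sum_lessThan_restrict:
  fixes F :: "nat \<Rightarrow> 'a::comm_monoid_add"
  assumes "n \<le> N"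
  shows "(\<Sum>k<N. if k < n then F k else 0) = (\<Sum>k<n. F k)"
proof -
  have "{k \<in> {..<N}. k < n} = {..<n}"
    using assms by auto
  then show ?thesis
    by (simp add: sum.inter_filter[symmetric])
qed

lemma sum_lessThan_select_block:
  fixes F :: "nat \<Rightarrow> 'a::comm_monoid_add"
  assumes "b < n" "n * m \<le> N"
  shows "(\<Sum>k<N. if k < n * m \<and> k div m = b then F (k mod m) else 0) = (\<Sum>j<m. F j)"
proof -
  have "(\<Sum>k<N. if k < n * m \<and> k div m = b then F (k mod m) else 0)
      = (\<Sum>k<n * m. if k div m = b then F (k mod m) else 0)"
    by (subst sum_lessThan_restrict[OF assms(2), symmetric]) (auto intro: sum.cong)
  also have "\<dots> = (\<Sum>b'<n. \<Sum>j<m. if b' = b then F j else 0)"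
    by (rule sum_lessThan_mult_div_mod)
  also have "\<dots> = (\<Sum>j<m. F j)"
    using assms(1) by (subst sum.swap) simp
  finally show ?thesis .
qed

lemma sum_lessThan_two_deltas:
  fixes H :: "nat \<Rightarrow> real"
  assumes "q1 \<noteq> q2" "q1 < D" "q2 < D"
  shows "(\<Sum>q<D. (if q = q1 then 1 else if q = q2 then -1 else 0) * H q) = H q1 - H q2"
proof -
  have "(\<Sum>q<D. (if q = q1 then 1 else if q = q2 then -1 else 0) * H q)
      = (\<Sum>q<D. (if q = q1 then H q1 else 0) - (if q = q2 then H q2 else 0))"
    by (rule sum.cong) (use assms in auto)
  also have "\<dots> = H q1 - H q2"
    using assms by (simp add: sum_subtractf)
  finally show ?thesis .
qed

lemma sum_le_one_if_le_delta:
  fixes f :: "nat \<Rightarrow> real"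
  assumes "\<And>k. f k \<le> (if k = k0 then 1 else 0)"
  shows "(\<Sum>k<N. f k) \<le> 1"
proof -
  have "(\<Sum>k<N. f k) \<le> (\<Sum>k<N. if k = k0 then 1 else 0)"
    by (intro sum_mono assms)
  also have "\<dots> \<le> 1"
    by simp
  finally show ?thesis .
qed

lemma sum_triple_mult_reorder:
  fixes f g :: "_ \<Rightarrow> _ \<Rightarrow> real"
  shows "(\<Sum>j\<in>J. \<Sum>i\<in>I. \<Sum>k\<in>K. f i k * g k j) = (\<Sum>k\<in>K. (\<Sum>i\<in>I. f i k) * (\<Sum>j\<in>J. g k j))"
proof -
  have "(\<Sum>j\<in>J. \<Sum>i\<in>I. \<Sum>k\<in>K. f i k * g k j) = (\<Sum>i\<in>I. \<Sum>j\<in>J. \<Sum>k\<in>K. f i k * g k j)"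
    by (rule sum.swap)
  also have "\<dots> = (\<Sum>i\<in>I. \<Sum>k\<in>K. \<Sum>j\<in>J. f i k * g k j)"
    by (intro sum.cong refl sum.swap)
  also have "\<dots> = (\<Sum>k\<in>K. \<Sum>i\<in>I. \<Sum>j\<in>J. f i k * g k j)"
    by (rule sum.swap)
  also have "\<dots> = (\<Sum>k\<in>K. (\<Sum>i\<in>I. f i k) * (\<Sum>j\<in>J. g k j))"
    by (simp add: sum_product)
  finally show ?thesis .
qed

lemma Max_image_shift:
  fixes G :: "nat \<Rightarrow> real"
  assumes "0 < n"
  shows "Max ((\<lambda>a. G (a - 1) + K) ` {1..n}) = Max (G ` {0..<n}) + K"
proof -
  have "(\<lambda>a. G (a - 1) + K) ` {1..n} = (\<lambda>v. v + K) ` G ` {0..<n}"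
    by (force simp: image_image image_iff Bex_def)
  also have "Max \<dots> = Max (G ` {0..<n}) + K"
    using assms by (intro mono_Max_commute[symmetric]) (auto simp: mono_def)
  finally show ?thesis .
qed

lemma sum_sq_add_le:
  fixes B :: "nat \<Rightarrow> real"
  assumes "0 < n" "\<epsilon>\<^sup>2 = (\<Sum>b<n. (B b)\<^sup>2) / (8 * n)"
  shows "(\<Sum>b<n. (B b + \<epsilon>)\<^sup>2) \<le> 9/4 * (\<Sum>b<n. (B b)\<^sup>2)"
proof -
  have "(\<Sum>b<n. (B b + \<epsilon>)\<^sup>2) \<le> (\<Sum>b<n. 2 * (B b)\<^sup>2 + 2 * \<epsilon>\<^sup>2)"
  proof (rule sum_mono)
    fix b
    have "0 \<le> (B b - \<epsilon>)\<^sup>2"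
      by simp
    then show "(B b + \<epsilon>)\<^sup>2 \<le> 2 * (B b)\<^sup>2 + 2 * \<epsilon>\<^sup>2"
      by (simp add: power2_eq_square algebra_simps)
  qed
  also have "\<dots> = 2 * (\<Sum>b<n. (B b)\<^sup>2) + 2 * n * \<epsilon>\<^sup>2"
    by (simp add: sum.distrib sum_distrib_left)
  also have "2 * n * \<epsilon>\<^sup>2 = (\<Sum>b<n. (B b)\<^sup>2) / 4"
    using assms by (simp add: field_simps)
  finally show ?thesis
    by simp
qed

lemma sum_le_sqrt_card_mult:
  fixes N :: "nat \<Rightarrow> real"
  assumes "\<forall>b. 0 \<le> N b" "(\<Sum>b<n. (N b)\<^sup>2) \<le> X"
  shows "(\<Sum>b<n. N b) \<le> sqrt n * sqrt X"
proof -
  have "(\<Sum>b<n. 1 * N b)\<^sup>2 \<le> (\<Sum>b<n. 1\<^sup>2) * (\<Sum>b<n. (N b)\<^sup>2)"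
    by (rule Cauchy_Schwarz_ineq_sum)
  also have "\<dots> \<le> n * X"
    using assms(2) by (simp add: mult_left_mono)
  finally have sq: "(\<Sum>b<n. N b)\<^sup>2 \<le> n * X"
    by simp
  have "(\<Sum>b<n. N b) = sqrt ((\<Sum>b<n. N b)\<^sup>2)"
    using assms(1) by (simp add: sum_nonneg)
  also have "\<dots> \<le> sqrt (n * X)"
    using sq by (rule real_sqrt_le_mono)
  also have "\<dots> = sqrt n * sqrt X"
    by (rule real_sqrt_mult)
  finally show ?thesis .
qed

lemma loss_constant_le:
  fixes \<gamma> n m Q :: real
  assumes "0 \<le> \<gamma>" "\<gamma> < 1" "0 < m" "1 \<le> n" "0 \<le> Q"
  shows "9 * Q / (m * n) \<le> 32 / (1 - \<gamma>)\<^sup>2 * (n + 1) * (n ^ 4 + 1) / m * Q"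
proof -
  have "(1 - \<gamma>)\<^sup>2 \<le> 1"
    using assms(1,2) by (simp add: power_le_one)
  then have "32 \<le> 32 / (1 - \<gamma>)\<^sup>2"
    using assms(2) by (simp add: field_simps)
  have "2 \<le> (n + 1) * (n ^ 4 + 1)"
    using assms(4) mult_mono[of 2 "n + 1" 1 "n ^ 4 + 1"] by (simp add: one_le_power)
  then have "32 * 2 \<le> 32 / (1 - \<gamma>)\<^sup>2 * ((n + 1) * (n ^ 4 + 1))"
    using \<open>32 \<le> 32 / (1 - \<gamma>)\<^sup>2\<close> by (intro mult_mono) auto
  moreover have "9 / n \<le> 9"
    using assms(4) by (simp add: divide_le_eq)
  ultimately have "9 / n \<le> 32 / (1 - \<gamma>)\<^sup>2 * ((n + 1) * (n ^ 4 + 1))"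
    by linarith
  then have "9 / n * (Q / m) \<le> 32 / (1 - \<gamma>)\<^sup>2 * ((n + 1) * (n ^ 4 + 1)) * (Q / m)"
    using assms(3,5) by (intro mult_right_mono) auto
  then show ?thesis
    by (simp add: field_simps)
qed

lemma path_constant_le:
  fixes \<gamma> n P Q :: real
  assumes "\<gamma> < 1" "1 \<le> n" "0 \<le> Q" "P \<le> 3/2 * sqrt n * sqrt Q"
  shows "n * (6 * (n\<^sup>2 / (1 - \<gamma>)) * (8/7 * P)) \<le> 12 / (1 - \<gamma>) * (n powr (7/2) + n powr (1/2)) * sqrt Q"
proof -
  define K where "K = 48/7 * n ^ 3 / (1 - \<gamma>)"
  have K: "0 \<le> K"
    using assms(1,2) by (simp add: K_def)
  have powr: "n powr (7/2) = n ^ 3 * sqrt n"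
    using assms(2) by (simp add: powr_add[of n 3 "1/2", simplified] powr_realpow powr_half_sqrt)
  have "n * (6 * (n\<^sup>2 / (1 - \<gamma>)) * (8/7 * P)) = K * P"
    by (simp add: K_def power2_eq_square power3_eq_cube mult_ac)
  also have "\<dots> \<le> K * (3/2 * sqrt n * sqrt Q)"
    using assms(4) K by (rule mult_left_mono)
  also have "\<dots> = 72/7 / (1 - \<gamma>) * n powr (7/2) * sqrt Q"
    using assms(1) by (simp add: K_def powr field_simps)
  also have "\<dots> \<le> 12 / (1 - \<gamma>) * (n powr (7/2) + n powr (1/2)) * sqrt Q"
    using assms(1,3) by (intro mult_right_mono mult_mono divide_right_mono) auto
  finally show ?thesis .
qed

lemma dyadic_block_bounds:
  fixes i l \<alpha> :: nat
  assumes "Suc l \<le> \<alpha>" "i < 2^\<alpha>" "2^Suc l dvd i"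
  shows "i div 2^Suc l < 2^(\<alpha> - Suc l)" "i + 2^l < 2^\<alpha>" "2^l dvd i"
proof -
  define k where "k = i div 2^Suc l"
  have i: "i = k * 2^Suc l"
    using assms(3) by (simp add: k_def)
  have n: "(2::nat)^\<alpha> = 2^(\<alpha> - Suc l) * 2^Suc l"
    using assms(1) by (simp add: power_add[symmetric] del: power_Suc)
  then show k: "i div 2^Suc l < 2^(\<alpha> - Suc l)"
    using assms(2) i by (simp add: k_def[symmetric])
  then have "(k + 1) * 2^Suc l \<le> 2^(\<alpha> - Suc l) * 2^Suc l"
    by (intro mult_le_mono1) (simp add: k_def)
  then have "i + 2 * 2^l \<le> 2^\<alpha>"
    using i n by (simp add: algebra_simps)
  moreover have "(0::nat) < 2^l"
    by simp
  ultimately show "i + 2^l < 2^\<alpha>"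
    by linarith
  show "2^l dvd i"
    using i by simp
qed

section \<open>A residual network computing the maximum of the approximations\<close>

lemma relu_max: "a + relu (b - a) = max a b"
  by (simp add: relu_def max_def)

definition block_max :: "(nat \<Rightarrow> real) \<Rightarrow> nat \<Rightarrow> nat \<Rightarrow> real" where
  "block_max g l i = Max (g ` {i..<i + 2^l})"

lemma block_max_0 [simp]: "block_max g 0 i = g i"
  by (simp add: block_max_def)

lemma block_max_Suc: "block_max g (Suc l) i = max (block_max g l i) (block_max g l (i + 2^l))"
proof -
  have "{i..<i + 2^Suc l} = {i..<i + 2^l} \<union> {i + 2^l..<i + 2^l + 2^l}"
    by auto
  then show ?thesis
    unfolding block_max_def by (simp add: image_Un Max_Un)
qed

lemma shallow_net_eq_sum: "shallow_net m \<omega>s x = (\<Sum>k<m. fst (\<omega>s k) / real m * relu (snd (\<omega>s k) \<bullet> x))"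
  by (simp add: shallow_net_def neuron_def sum_divide_distrib)

text \<open>
  Layout of the hidden state, with \<open>d = CARD('d)\<close> and \<open>n = 2^\<alpha>\<close>: coordinate \<open>e j < d\<close> carries the
  input coordinate \<open>j\<close>; layer 1 writes \<open>g b\<close> both to \<open>d + b\<close> and to \<open>d + n + b\<close>. Layer \<open>l + 1\<close>
  (\<open>1 \<le> l \<le> \<alpha>\<close>) adds \<open>relu (v (i + 2^(l-1)) - v i)\<close> to the value \<open>v i\<close> at \<open>d + n + i\<close> for every
  \<open>i\<close> divisible by \<open>2^l\<close>, so these coordinates hold the maxima of \<open>g\<close> over dyadic blocks
  (\<open>block_max\<close>), and \<open>d + n\<close> finally holds \<open>max\<^sub>b g b\<close>.
\<close>

definition max_net_V :: "('d::finite \<Rightarrow> nat) \<Rightarrow> nat \<Rightarrow> 'd \<Rightarrow> real" where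
  "max_net_V e i j = (if i = e j then 1 else 0)"

definition max_net_W ::
  "('d::finite \<Rightarrow> nat) \<Rightarrow> nat \<Rightarrow> nat \<Rightarrow> (nat \<Rightarrow> nat \<Rightarrow> real \<times> (real^'d)) \<Rightarrow> nat \<Rightarrow> nat \<Rightarrow> nat \<Rightarrow> real"
where
  "max_net_W e m \<alpha> \<omega>s l k p =
    (if l = 1 then
       (if k < 2^\<alpha> * m \<and> p < CARD('d) then snd (\<omega>s (k div m) (k mod m)) $ inv e p else 0)
     else if 2 \<le> l \<and> l \<le> \<alpha> + 1 \<and> k < 2^(\<alpha> + 1 - l) then
       (if p = CARD('d) + 2^\<alpha> + k * 2^(l - 1) + 2^(l - 2) then 1
        else if p = CARD('d) + 2^\<alpha> + k * 2^(l - 1) then -1 else 0)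
     else 0)"

definition max_net_U ::
  "nat \<Rightarrow> nat \<Rightarrow> (nat \<Rightarrow> nat \<Rightarrow> real \<times> (real^'d::finite)) \<Rightarrow> nat \<Rightarrow> nat \<Rightarrow> nat \<Rightarrow> real"
where
  "max_net_U m \<alpha> \<omega>s l i k =
    (if l = 1 then
       (if k < 2^\<alpha> * m \<and> (i = CARD('d) + k div m \<or> i = CARD('d) + 2^\<alpha> + k div m)
        then fst (\<omega>s (k div m) (k mod m)) / real m else 0)
     else if 2 \<le> l \<and> l \<le> \<alpha> + 1 \<and> k < 2^(\<alpha> + 1 - l) \<and> i = CARD('d) + 2^\<alpha> + k * 2^(l - 1) then 1
     else 0)"

definition max_net_out :: "nat \<Rightarrow> nat \<Rightarrow> real \<Rightarrow> nat \<Rightarrow> nat \<Rightarrow> real" where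
  "max_net_out d \<alpha> c b i = (if i = d + b then 1 else 0) + (if i = d + 2^\<alpha> then c else 0)"

definition max_net ::
  "('d::finite \<Rightarrow> nat) \<Rightarrow> nat \<Rightarrow> nat \<Rightarrow> real \<Rightarrow> (nat \<Rightarrow> nat \<Rightarrow> real \<times> (real^'d)) \<Rightarrow> nat \<Rightarrow> 'd resnet"
where
  "max_net e m \<alpha> c \<omega>s b =
     ResNet (max_net_out CARD('d) \<alpha> c b) (max_net_V e) (max_net_W e m \<alpha> \<omega>s) (max_net_U m \<alpha> \<omega>s)"

lemma max_net_sel [simp]:
  "out_w (max_net e m \<alpha> c \<omega>s b) = max_net_out CARD('d) \<alpha> c b"
  "in_w (max_net e m \<alpha> c \<omega>s b) = max_net_V e"
  "W_w (max_net e m \<alpha> c \<omega>s b) = max_net_W e m \<alpha> \<omega>s"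
  "U_w (max_net e m \<alpha> c \<omega>s b) = max_net_U m \<alpha> \<omega>s"
  for e :: "'d::finite \<Rightarrow> nat"
  by (simp_all add: max_net_def)

lemma max_net_W_Suc:
  fixes \<omega>s :: "nat \<Rightarrow> nat \<Rightarrow> real \<times> (real^'d::finite)"
  assumes "1 \<le> l" "l \<le> \<alpha>"
  shows "max_net_W e m \<alpha> \<omega>s (Suc l) k q =
    (if k < 2^(\<alpha> - l) then
       (if q = CARD('d) + 2^\<alpha> + (k * 2^l + 2^(l - 1)) then 1
        else if q = CARD('d) + 2^\<alpha> + k * 2^l then -1 else 0)
     else 0)"
  using assms by (simp add: max_net_W_def numeral_2_eq_2)

lemma max_net_U_Suc:
  fixes \<omega>s :: "nat \<Rightarrow> nat \<Rightarrow> real \<times> (real^'d::finite)"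
  assumes "1 \<le> l" "l \<le> \<alpha>"
  shows "max_net_U m \<alpha> \<omega>s (Suc l) i k = (if k < 2^(\<alpha> - l) \<and> i = CARD('d) + 2^\<alpha> + k * 2^l then 1 else 0)"
  using assms by (simp add: max_net_U_def)

lemma sum_abs_max_net_W_Suc:
  fixes \<omega>s :: "nat \<Rightarrow> nat \<Rightarrow> real \<times> (real^'d::finite)"
  assumes "1 \<le> l" "l \<le> \<alpha>"
  shows "(\<Sum>k<N. \<bar>max_net_W e m \<alpha> \<omega>s (Suc l) k j\<bar>) \<le> 1"
proof (rule sum_le_one_if_le_delta)
  fix k
  have "(k * 2^l + 2^(l - 1)) div (2::nat)^l = k"
    using assms by (simp add: div_add1_eq[of "k * 2^l"] power_strict_increasing)
  then show "\<bar>max_net_W e m \<alpha> \<omega>s (Suc l) k j\<bar> \<le> (if k = (j - CARD('d) - 2^\<alpha>) div 2^l then 1 else 0)"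
    using assms by (auto simp: max_net_W_Suc)
qed

lemma sum_abs_max_net_U_Suc:
  fixes \<omega>s :: "nat \<Rightarrow> nat \<Rightarrow> real \<times> (real^'d::finite)"
  assumes "1 \<le> l" "l \<le> \<alpha>"
  shows "(\<Sum>i<N. \<bar>max_net_U m \<alpha> \<omega>s (Suc l) i k\<bar>) \<le> 1"
proof (rule sum_le_one_if_le_delta)
  fix i
  show "\<bar>max_net_U m \<alpha> \<omega>s (Suc l) i k\<bar> \<le> (if i = CARD('d) + 2^\<alpha> + k * 2^l then 1 else 0)"
    using assms by (simp add: max_net_U_Suc)
qed

lemma path_row_nonneg: "0 \<le> path_row m D L \<theta> t p"
  by (induction t arbitrary: p) (auto intro!: add_nonneg_nonneg mult_nonneg_nonneg sum_nonneg)

context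
  fixes e :: "'d::finite \<Rightarrow> nat" and m \<alpha> mw :: nat and c :: real
    and \<omega>s :: "nat \<Rightarrow> nat \<Rightarrow> real \<times> (real^'d)"
  assumes e: "bij_betw e UNIV {0..<CARD('d)}" and m: "0 < m" and mw: "2^\<alpha> * m \<le> mw"
begin

lemma e_less: "e j < CARD('d)"
  using e by (auto simp: bij_betw_def)

lemma inv_e_e [simp]: "inv e (e j) = j"
  using e by (simp add: bij_betw_def)

lemma e_inv_e: "p < CARD('d) \<Longrightarrow> e (inv e p) = p"
  using e by (metis atLeastLessThan_iff bij_betw_inv_into_right zero_le)

lemma hidden_max_net_0:
  "hidden mw D (max_net e m \<alpha> c \<omega>s b) x 0 p = (if p < CARD('d) then x $ inv e p else 0)"
proof -
  have "hidden mw D (max_net e m \<alpha> c \<omega>s b) x 0 p = (\<Sum>j\<in>UNIV. if j = inv e p \<and> p < CARD('d) then x $ j else 0)"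
    by (auto simp: max_net_V_def e_less e_inv_e intro!: sum.cong)
  then show ?thesis
    by (simp add: sum.delta')
qed

lemma max_net_preactivation_1:
  assumes "k < 2^\<alpha> * m" "CARD('d) \<le> D"
  shows "(\<Sum>q<D. max_net_W e m \<alpha> \<omega>s 1 k q * hidden mw D (max_net e m \<alpha> c \<omega>s b) x 0 q)
    = snd (\<omega>s (k div m) (k mod m)) \<bullet> x"
proof -
  let ?w = "snd (\<omega>s (k div m) (k mod m))"
  have "(\<Sum>q<D. max_net_W e m \<alpha> \<omega>s 1 k q * hidden mw D (max_net e m \<alpha> c \<omega>s b) x 0 q)
      = (\<Sum>q<D. if q < CARD('d) then ?w $ inv e q * x $ inv e q else 0)"
    using assms(1) by (intro sum.cong) (auto simp: max_net_W_def hidden_max_net_0 simp del: hidden.simps)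
  also have "\<dots> = (\<Sum>q<CARD('d). ?w $ inv e q * x $ inv e q)"
    using assms(2) by (rule sum_lessThan_restrict)
  also have "{..<CARD('d)} = e ` UNIV"
    using e by (auto simp: bij_betw_def)
  also have "(\<Sum>q\<in>e ` UNIV. ?w $ inv e q * x $ inv e q) = ?w \<bullet> x"
    using e by (subst sum.reindex) (auto simp: bij_betw_def inner_vec_def)
  finally show ?thesis .
qed

lemma hidden_max_net_1:
  assumes b: "b < 2^\<alpha>" and D: "CARD('d) + 2 * 2^\<alpha> \<le> D"
  shows "hidden mw D (max_net e m \<alpha> c \<omega>s b0) x 1 (CARD('d) + b) = shallow_net m (\<omega>s b) x"
    and "hidden mw D (max_net e m \<alpha> c \<omega>s b0) x 1 (CARD('d) + 2^\<alpha> + b) = shallow_net m (\<omega>s b) x"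
proof -
  let ?H = "hidden mw D (max_net e m \<alpha> c \<omega>s b0) x"
  let ?F = "\<lambda>j. fst (\<omega>s b j) / real m * relu (snd (\<omega>s b j) \<bullet> x)"
  have div_less: "k div m < 2^\<alpha>" if "k < 2^\<alpha> * m" for k
    using that m by (simp add: div_less_iff_less_mult)
  have layer: "?H 1 (CARD('d) + j) = (\<Sum>k<mw. max_net_U m \<alpha> \<omega>s 1 (CARD('d) + j) k
      * relu (\<Sum>q<D. max_net_W e m \<alpha> \<omega>s 1 k q * ?H 0 q))" for j
    by (simp add: hidden_max_net_0 del: hidden.simps(1))
  have "?H 1 (CARD('d) + b) = (\<Sum>k<mw. if k < 2^\<alpha> * m \<and> k div m = b then ?F (k mod m) else 0)"
    unfolding layer using b D
    by (intro sum.cong) (auto simp: max_net_U_def max_net_preactivation_1[unfolded One_nat_def] simp del: hidden.simps)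
  also have "\<dots> = shallow_net m (\<omega>s b) x"
    unfolding shallow_net_eq_sum by (rule sum_lessThan_select_block[OF b mw])
  finally show "?H 1 (CARD('d) + b) = shallow_net m (\<omega>s b) x" .
  have "?H 1 (CARD('d) + 2^\<alpha> + b) = (\<Sum>k<mw. if k < 2^\<alpha> * m \<and> k div m = b then ?F (k mod m) else 0)"
    unfolding add.assoc layer using b D
    by (intro sum.cong) (auto simp: max_net_U_def max_net_preactivation_1[unfolded One_nat_def] dest: div_less simp del: hidden.simps)
  also have "\<dots> = shallow_net m (\<omega>s b) x"
    unfolding shallow_net_eq_sum by (rule sum_lessThan_select_block[OF b mw])
  finally show "?H 1 (CARD('d) + 2^\<alpha> + b) = shallow_net m (\<omega>s b) x" .
qed

lemma hidden_max_net_Suc_Suc: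
  assumes l: "Suc l \<le> \<alpha>" and D: "CARD('d) + 2 * 2^\<alpha> \<le> D"
    and first: "\<forall>b<2^\<alpha>. hidden mw D (max_net e m \<alpha> c \<omega>s b0) x (Suc l) (CARD('d) + b) = g b"
    and second: "\<forall>i<2^\<alpha>. 2^l dvd i \<longrightarrow>
      hidden mw D (max_net e m \<alpha> c \<omega>s b0) x (Suc l) (CARD('d) + 2^\<alpha> + i) = block_max g l i"
  shows "\<forall>b<2^\<alpha>. hidden mw D (max_net e m \<alpha> c \<omega>s b0) x (Suc (Suc l)) (CARD('d) + b) = g b"
    and "\<forall>i<2^\<alpha>. 2^Suc l dvd i \<longrightarrow>
      hidden mw D (max_net e m \<alpha> c \<omega>s b0) x (Suc (Suc l)) (CARD('d) + 2^\<alpha> + i) = block_max g (Suc l) i"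
proof -
  let ?H = "hidden mw D (max_net e m \<alpha> c \<omega>s b0) x"
  let ?d = "CARD('d)"
  let ?n = "(2::nat)^\<alpha>"
  let ?pre = "\<lambda>k. \<Sum>q<D. max_net_W e m \<alpha> \<omega>s (Suc (Suc l)) k q * ?H (Suc l) q"
  have layer: "?H (Suc (Suc l)) p = ?H (Suc l) p + (\<Sum>k<mw. max_net_U m \<alpha> \<omega>s (Suc (Suc l)) p k * relu (?pre k))" for p
    by simp
  show "\<forall>b<?n. ?H (Suc (Suc l)) (?d + b) = g b"
  proof (intro allI impI)
    fix b assume b: "b < ?n"
    have "(\<Sum>k<mw. max_net_U m \<alpha> \<omega>s (Suc (Suc l)) (?d + b) k * relu (?pre k)) = 0"
      by (rule sum.neutral) (use b l in \<open>auto simp: max_net_U_Suc\<close>)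
    then show "?H (Suc (Suc l)) (?d + b) = g b"
      using layer[of "?d + b"] first b by simp
  qed
  show "\<forall>i<?n. 2^Suc l dvd i \<longrightarrow> ?H (Suc (Suc l)) (?d + ?n + i) = block_max g (Suc l) i"
  proof (intro allI impI)
    fix i assume i: "i < ?n" "2^Suc l dvd i"
    define k0 where "k0 = i div 2^Suc l"
    have i_eq: "i = k0 * 2^Suc l"
      using i(2) by (simp add: k0_def)
    obtain k0: "k0 < 2^(\<alpha> - Suc l)" and i_next: "i + 2^l < ?n" and dvd_i: "2^l dvd i"
      using dyadic_block_bounds[OF l i] unfolding k0_def by blast
    have "(2::nat)^(\<alpha> - Suc l) \<le> 2^\<alpha>"
      by (simp add: power_increasing)
    also have "\<dots> \<le> 2^\<alpha> * m"
      using m by simp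
    finally have "k0 < mw"
      using k0 mw by linarith
    have "(\<Sum>k<mw. max_net_U m \<alpha> \<omega>s (Suc (Suc l)) (?d + ?n + i) k * relu (?pre k))
        = (\<Sum>k<mw. if k = k0 then relu (?pre k0) else 0)"
      using l k0 by (intro sum.cong refl) (auto simp: max_net_U_Suc i_eq)
    also have "\<dots> = relu (?pre k0)"
      using \<open>k0 < mw\<close> by simp
    also have "?pre k0
        = (\<Sum>q<D. (if q = ?d + ?n + (i + 2^l) then 1 else if q = ?d + ?n + i then -1 else 0) * ?H (Suc l) q)"
      using l k0 by (intro sum.cong refl) (auto simp: max_net_W_Suc i_eq)
    also have "\<dots> = ?H (Suc l) (?d + ?n + (i + 2^l)) - ?H (Suc l) (?d + ?n + i)"
      by (rule sum_lessThan_two_deltas) (use i_next D i(1) in auto)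
    also have "\<dots> = block_max g l (i + 2^l) - block_max g l i"
      using second i_next i(1) dvd_i by (simp add: add.assoc)
    finally have "?H (Suc (Suc l)) (?d + ?n + i) = block_max g l i + relu (block_max g l (i + 2^l) - block_max g l i)"
      using layer[of "?d + ?n + i"] second i(1) dvd_i by simp
    then show "?H (Suc (Suc l)) (?d + ?n + i) = block_max g (Suc l) i"
      by (simp add: relu_max block_max_Suc)
  qed
qed

lemma hidden_max_net:
  assumes j: "j \<le> \<alpha>" and D: "CARD('d) + 2 * 2^\<alpha> \<le> D"
  shows "(\<forall>b<2^\<alpha>. hidden mw D (max_net e m \<alpha> c \<omega>s b0) x (Suc j) (CARD('d) + b) = shallow_net m (\<omega>s b) x)
    \<and> (\<forall>i<2^\<alpha>. 2^j dvd i \<longrightarrow> hidden mw D (max_net e m \<alpha> c \<omega>s b0) x (Suc j) (CARD('d) + 2^\<alpha> + i)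
                                   = block_max (\<lambda>b. shallow_net m (\<omega>s b) x) j i)"
  using j
proof (induction j)
  case 0
  then show ?case
    using hidden_max_net_1[OF _ D] by simp
next
  case (Suc j)
  note IH = Suc.IH[OF Suc_leD[OF Suc.prems]]
  show ?case
    using hidden_max_net_Suc_Suc[OF Suc.prems D IH[THEN conjunct1] IH[THEN conjunct2]] by blast
qed

lemma resnet_eval_max_net:
  assumes b: "b < 2^\<alpha>" and D: "D = CARD('d) + 2 * 2^\<alpha>"
  shows "resnet_eval mw D (\<alpha> + 1) (max_net e m \<alpha> c \<omega>s b) x
    = shallow_net m (\<omega>s b) x + c * Max ((\<lambda>b'. shallow_net m (\<omega>s b') x) ` {0..<2^\<alpha>})"
proof -
  let ?H = "hidden mw D (max_net e m \<alpha> c \<omega>s b) x (Suc \<alpha>)"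
  have "resnet_eval mw D (\<alpha> + 1) (max_net e m \<alpha> c \<omega>s b) x
      = (\<Sum>i<D. (if i = CARD('d) + b then ?H i else 0) + (if i = CARD('d) + 2^\<alpha> then c * ?H i else 0))"
    unfolding resnet_eval_def by (intro sum.cong) (auto simp: max_net_out_def algebra_simps)
  also have "\<dots> = ?H (CARD('d) + b) + c * ?H (CARD('d) + 2^\<alpha>)"
    using b D by (simp add: sum.distrib)
  also have "\<dots> = shallow_net m (\<omega>s b) x + c * block_max (\<lambda>b'. shallow_net m (\<omega>s b') x) \<alpha> 0"
    using hidden_max_net[OF order_refl, of D b x] b D
    by (auto dest: spec[of _ b] spec[of _ 0] simp del: hidden.simps)
  finally show ?thesis
    by (simp add: block_max_def)
qed

lemma path_row_max_net:
  assumes "t \<le> \<alpha>"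
  shows "(\<forall>p<CARD('d). path_row mw D (\<alpha> + 1) (max_net e m \<alpha> c \<omega>s b) t p = 0)
    \<and> (\<forall>p. path_row mw D (\<alpha> + 1) (max_net e m \<alpha> c \<omega>s b) t p \<le> (1 + \<bar>c\<bar>) * 4^t)"
  using assms
proof (induction t)
  case 0
  then show ?case
    by (auto simp: max_net_out_def)
next
  case (Suc t)
  let ?R = "path_row mw D (\<alpha> + 1) (max_net e m \<alpha> c \<omega>s b)"
  let ?B = "(1 + \<bar>c\<bar>) * 4^t"
  let ?UW = "\<lambda>i j. \<Sum>k<mw. \<bar>max_net_U m \<alpha> \<omega>s (Suc (\<alpha> - t)) i k\<bar> * \<bar>max_net_W e m \<alpha> \<omega>s (Suc (\<alpha> - t)) k j\<bar>"
  have l: "1 \<le> \<alpha> - t" "\<alpha> - t \<le> \<alpha>"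
    using Suc.prems by auto
  have IH: "\<forall>p<CARD('d). ?R t p = 0" "\<forall>p. ?R t p \<le> ?B"
    using Suc by auto
  have row: "?R (Suc t) j = ?R t j + 3 * (\<Sum>i<D. ?R t i * ?UW i j)" for j
    using Suc.prems by (simp add: Suc_diff_le)
  have "(\<Sum>i<D. ?R t i * ?UW i j) \<le> ?B" for j
  proof -
    have "(\<Sum>i<D. ?R t i * ?UW i j) \<le> (\<Sum>i<D. ?B * ?UW i j)"
      using IH(2) by (intro sum_mono mult_right_mono sum_nonneg) auto
    also have "\<dots> = ?B * (\<Sum>i<D. ?UW i j)"
      by (rule sum_distrib_left[symmetric])
    also have "?B * (\<Sum>i<D. ?UW i j) = ?B * (\<Sum>k<mw. (\<Sum>i<D. \<bar>max_net_U m \<alpha> \<omega>s (Suc (\<alpha> - t)) i k\<bar>)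
        * \<bar>max_net_W e m \<alpha> \<omega>s (Suc (\<alpha> - t)) k j\<bar>)"
      unfolding sum_distrib_right by (subst sum.swap) (rule refl)
    also have "\<dots> \<le> ?B * (\<Sum>k<mw. \<bar>max_net_W e m \<alpha> \<omega>s (Suc (\<alpha> - t)) k j\<bar>)"
      using sum_abs_max_net_U_Suc[OF l] by (intro mult_left_mono sum_mono mult_left_le_one_le) auto
    also have "\<dots> \<le> ?B"
      using sum_abs_max_net_W_Suc[OF l] by (intro mult_right_le_one_le) auto
    finally show ?thesis .
  qed
  note col = this
  have UW0: "?UW i p = 0" if "p < CARD('d)" for i p
    using that l by (intro sum.neutral) (auto simp: max_net_W_Suc)
  show ?case
  proof (intro conjI allI impI)
    fix p :: nat
    assume "p < CARD('d)"
    then show "?R (Suc t) p = 0"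
      unfolding row using IH(1) UW0 by simp
  next
    fix p
    have "?R (Suc t) p \<le> ?B + 3 * ?B"
      unfolding row using IH(2) col[of p] by (intro add_mono) auto
    then show "?R (Suc t) p \<le> (1 + \<bar>c\<bar>) * 4 ^ Suc t"
      by simp
  qed
qed

lemma max_net_layer_1_weights:
  "(\<Sum>i<D. \<bar>max_net_U m \<alpha> \<omega>s 1 i k\<bar>) * (\<Sum>j\<in>UNIV. \<bar>max_net_W e m \<alpha> \<omega>s 1 k (e j)\<bar>)
    \<le> (if k < 2^\<alpha> * m then 2 * (neuron_cost (\<omega>s (k div m) (k mod m)) / real m) else 0)"
proof (cases "k < 2^\<alpha> * m")
  case True
  let ?u = "fst (\<omega>s (k div m) (k mod m))"
  have W: "(\<Sum>j\<in>UNIV. \<bar>max_net_W e m \<alpha> \<omega>s 1 k (e j)\<bar>) = l1norm (snd (\<omega>s (k div m) (k mod m)))"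
    using True e_less by (simp add: max_net_W_def l1norm_def)
  have "(\<Sum>i<D. \<bar>max_net_U m \<alpha> \<omega>s 1 i k\<bar>)
      \<le> (\<Sum>i<D. (if i = CARD('d) + k div m then \<bar>?u\<bar> / real m else 0)
        + (if i = CARD('d) + 2^\<alpha> + k div m then \<bar>?u\<bar> / real m else 0))"
    by (intro sum_mono) (auto simp: max_net_U_def)
  also have "\<dots> \<le> 2 * \<bar>?u\<bar> / real m"
    using m by (simp add: sum.distrib divide_right_mono)
  finally have U: "(\<Sum>i<D. \<bar>max_net_U m \<alpha> \<omega>s 1 i k\<bar>) \<le> 2 * \<bar>?u\<bar> / real m" .
  show ?thesis
    using True mult_right_mono[OF U l1norm_nonneg] unfolding W
    by (simp add: neuron_cost_def mult.assoc)
next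
  case False
  then show ?thesis
    by (simp add: max_net_U_def)
qed

lemma path_norm_max_net:
  assumes b: "b < 2^\<alpha>" and D: "D = CARD('d) + 2 * 2^\<alpha>"
  shows "path_norm mw D (\<alpha> + 1) (max_net e m \<alpha> c \<omega>s b)
    \<le> 6 * ((1 + \<bar>c\<bar>) * 4^\<alpha>) * (\<Sum>b'<2^\<alpha>. shallow_cost m (\<omega>s b'))"
proof -
  let ?R = "path_row mw D (\<alpha> + 1) (max_net e m \<alpha> c \<omega>s b)"
  let ?B = "(1 + \<bar>c\<bar>) * 4^\<alpha>"
  let ?U = "\<lambda>i k. \<bar>max_net_U m \<alpha> \<omega>s 1 i k\<bar>"
  let ?W = "\<lambda>k j. \<bar>max_net_W e m \<alpha> \<omega>s 1 k (e j)\<bar>"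
  let ?cost = "\<lambda>k. neuron_cost (\<omega>s (k div m) (k mod m)) / real m"
  have row: "\<forall>p<CARD('d). ?R \<alpha> p = 0" "\<forall>p. ?R \<alpha> p \<le> ?B"
    using path_row_max_net[OF order_refl] by auto
  have input: "\<bar>\<Sum>i<D. ?R (\<alpha> + 1) i * \<bar>max_net_V e i j\<bar>\<bar> = ?R (Suc \<alpha>) (e j)" for j
  proof -
    have "(\<Sum>i<D. ?R (\<alpha> + 1) i * \<bar>max_net_V e i j\<bar>) = ?R (Suc \<alpha>) (e j)"
      using e_less[of j] D by (simp add: max_net_V_def if_distrib cong: if_cong)
    then show ?thesis
      by (metis abs_of_nonneg path_row_nonneg)
  qed
  have top_row: "?R (Suc \<alpha>) (e j) \<le> 3 * ?B * (\<Sum>i<D. \<Sum>k<mw. ?U i k * ?W k j)" for j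
  proof -
    have "?R (Suc \<alpha>) (e j) = 3 * (\<Sum>i<D. ?R \<alpha> i * (\<Sum>k<mw. ?U i k * ?W k j))"
      using row(1) e_less[of j] by simp
    also have "\<dots> \<le> 3 * (\<Sum>i<D. ?B * (\<Sum>k<mw. ?U i k * ?W k j))"
      using row(2) by (intro mult_left_mono sum_mono mult_right_mono sum_nonneg) auto
    finally show ?thesis
      by (simp add: sum_distrib_left mult.assoc)
  qed
  have "path_norm mw D (\<alpha> + 1) (max_net e m \<alpha> c \<omega>s b) = (\<Sum>j\<in>UNIV. ?R (Suc \<alpha>) (e j))"
    unfolding path_norm_def using input by simp
  also have "\<dots> \<le> (\<Sum>j\<in>UNIV. 3 * ?B * (\<Sum>i<D. \<Sum>k<mw. ?U i k * ?W k j))"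
    by (intro sum_mono top_row)
  also have "\<dots> = 3 * ?B * (\<Sum>k<mw. (\<Sum>i<D. ?U i k) * (\<Sum>j\<in>UNIV. ?W k j))"
    by (simp add: sum_distrib_left[symmetric] sum_triple_mult_reorder)
  also have "\<dots> \<le> 3 * ?B * (\<Sum>k<mw. if k < 2^\<alpha> * m then 2 * ?cost k else 0)"
    by (intro mult_left_mono sum_mono max_net_layer_1_weights) simp
  also have "(\<Sum>k<mw. if k < 2^\<alpha> * m then 2 * ?cost k else 0) = (\<Sum>k<2^\<alpha> * m. 2 * ?cost k)"
    by (rule sum_lessThan_restrict[OF mw])
  also have "\<dots> = 2 * (\<Sum>b'<2^\<alpha>. shallow_cost m (\<omega>s b'))"
    using sum_lessThan_mult_div_mod[where F="\<lambda>b j. 2 * neuron_cost (\<omega>s b j) / real m" and n="2^\<alpha>" and m=m]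
    by (simp add: shallow_cost_def sum_distrib_left sum_divide_distrib)
  finally show ?thesis
    by simp
qed

lemma bellman_residual_max_net:
  assumes c: "c = \<gamma> / (1 - \<gamma>)" "\<gamma> \<noteq> 1" and a: "a \<in> {1..2^\<alpha>}"
    and D: "D = CARD('d) + 2 * 2^\<alpha>"
  shows "resnet_eval mw D (\<alpha> + 1) (max_net e m \<alpha> c \<omega>s (a - 1)) s - r s a
      - \<gamma> * Max ((\<lambda>a'. resnet_eval mw D (\<alpha> + 1) (max_net e m \<alpha> c \<omega>s (a' - 1)) s) ` {1..2^\<alpha>})
    = shallow_net m (\<omega>s (a - 1)) s - r s a"
proof -
  let ?g = "\<lambda>b. shallow_net m (\<omega>s b) s"
  let ?M = "Max (?g ` {0..<2^\<alpha>})"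
  have eval: "resnet_eval mw D (\<alpha> + 1) (max_net e m \<alpha> c \<omega>s (a' - 1)) s = ?g (a' - 1) + c * ?M"
    if "a' \<in> {1..2^\<alpha>}" for a'
    using that by (intro resnet_eval_max_net D) auto
  have "(\<lambda>a'. resnet_eval mw D (\<alpha> + 1) (max_net e m \<alpha> c \<omega>s (a' - 1)) s) ` {1..2^\<alpha>}
      = (\<lambda>a'. ?g (a' - 1) + c * ?M) ` {1..2^\<alpha>}"
    by (rule image_cong[OF refl eval])
  then have "Max ((\<lambda>a'. resnet_eval mw D (\<alpha> + 1) (max_net e m \<alpha> c \<omega>s (a' - 1)) s) ` {1..2^\<alpha>}) = ?M + c * ?M"
    using Max_image_shift[of "2^\<alpha>" ?g "c * ?M"] by simp
  then have "resnet_eval mw D (\<alpha> + 1) (max_net e m \<alpha> c \<omega>s (a - 1)) s - r s a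
      - \<gamma> * Max ((\<lambda>a'. resnet_eval mw D (\<alpha> + 1) (max_net e m \<alpha> c \<omega>s (a' - 1)) s) ` {1..2^\<alpha>})
    = ?g (a - 1) - r s a + (c - \<gamma> * (1 + c)) * ?M"
    unfolding eval[OF a] by (simp add: algebra_simps)
  also have "c - \<gamma> * (1 + c) = 0"
    using c by (simp add: field_simps)
  finally show ?thesis
    by simp
qed

lemma bellman_loss_max_net:
  fixes S :: "(real^'d) set" and r :: "real^'d \<Rightarrow> nat \<Rightarrow> real" and g :: "nat \<Rightarrow> real^'d \<Rightarrow> real"
  assumes c: "c = \<gamma> / (1 - \<gamma>)" "\<gamma> \<noteq> 1" and S: "S \<in> sets borel"
    and g: "\<forall>b<2^\<alpha>. g b \<in> borel_measurable borel \<and> (\<forall>s\<in>S. g b s = r s (Suc b))"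
    and err: "\<forall>b<2^\<alpha>. (\<integral>\<^sup>+s. ennreal ((shallow_net m (\<omega>s b) s - g b s)\<^sup>2) \<partial>uniform_measure lborel S) \<le> ennreal (\<epsilon> b)"
    and \<epsilon>: "\<forall>b. 0 \<le> \<epsilon> b"
  shows "bellman_loss S {1..2^\<alpha>} \<gamma> mw (CARD('d) + 2 * 2^\<alpha>) (\<alpha> + 1) r (\<lambda>a. max_net e m \<alpha> c \<omega>s (a - 1))
    \<le> (\<Sum>b<2^\<alpha>. \<epsilon> b) / (2 * 2^\<alpha>)"
proof -
  let ?n = "(2::nat)^\<alpha>"
  let ?D = "CARD('d) + 2 * 2^\<alpha>"
  let ?\<mu> = "uniform_measure lborel S"
  let ?f = "\<lambda>a s. resnet_eval mw ?D (\<alpha> + 1) (max_net e m \<alpha> c \<omega>s (a - 1)) s"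
  let ?F = "\<lambda>s. 1 / real (card {1..?n}) * (\<Sum>a\<in>{1..?n}. (?f a s - r s a - \<gamma> * Max ((\<lambda>a'. ?f a' s) ` {1..?n}))\<^sup>2)"
  let ?err = "\<lambda>b s. (shallow_net m (\<omega>s b) s - g b s)\<^sup>2"
  have F_eq: "AE s in ?\<mu>. ?F s = 1 / real ?n * (\<Sum>b<?n. ?err b s)"
  proof (rule AE_uniform_measureI)
    show "S \<in> sets lborel"
      using S by simp
    have "?F s = 1 / real ?n * (\<Sum>b<?n. ?err b s)" if "s \<in> S" for s
    proof -
      have "(\<Sum>a\<in>{1..?n}. (?f a s - r s a - \<gamma> * Max ((\<lambda>a'. ?f a' s) ` {1..?n}))\<^sup>2)
          = (\<Sum>a\<in>{1..?n}. (shallow_net m (\<omega>s (a - 1)) s - r s a)\<^sup>2)"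
        by (intro sum.cong refl) (simp only: bellman_residual_max_net[OF c _ refl])
      also have "\<dots> = (\<Sum>b<?n. ?err b s)"
        using g that by (auto simp: sum.atLeast1_atMost_eq intro!: sum.cong)
      finally show ?thesis
        by simp
    qed
    then show "AE s in lborel. s \<in> S \<longrightarrow> ?F s = 1 / real ?n * (\<Sum>b<?n. ?err b s)"
      by simp
  qed
  have meas: "(\<lambda>s. ennreal (?err b s)) \<in> borel_measurable ?\<mu>" if "b < ?n" for b
  proof -
    have [measurable]: "g b \<in> borel_measurable borel"
      using g that by auto
    show ?thesis
      by (simp cong: measurable_cong_sets) measurable
  qed
  have "(\<integral>\<^sup>+s. ennreal (?F s) \<partial>?\<mu>) = (\<integral>\<^sup>+s. ennreal (1 / real ?n) * (\<Sum>b<?n. ennreal (?err b s)) \<partial>?\<mu>)"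
    using F_eq by (intro nn_integral_cong_AE) (auto elim!: eventually_mono simp flip: ennreal_mult')
  also have "\<dots> = ennreal (1 / real ?n) * (\<integral>\<^sup>+s. (\<Sum>b<?n. ennreal (?err b s)) \<partial>?\<mu>)"
    by (rule nn_integral_cmult) (use meas in \<open>auto intro!: borel_measurable_sum\<close>)
  also have "\<dots> = ennreal (1 / real ?n) * (\<Sum>b<?n. \<integral>\<^sup>+s. ennreal (?err b s) \<partial>?\<mu>)"
    by (subst nn_integral_sum) (use meas in auto)
  also have "\<dots> \<le> ennreal (1 / real ?n) * (\<Sum>b<?n. ennreal (\<epsilon> b))"
    using err by (intro mult_left_mono sum_mono) auto
  also have "\<dots> = ennreal ((\<Sum>b<?n. \<epsilon> b) / real ?n)"
    using \<epsilon> by (simp add: sum_nonneg flip: ennreal_mult)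
  finally have "(\<integral>s. ?F s \<partial>?\<mu>) \<le> (\<Sum>b<?n. \<epsilon> b) / real ?n"
    using \<epsilon> by (intro integral_real_bounded) (auto simp: sum_nonneg)
  then show ?thesis
    by (simp add: bellman_loss_def)
qed

lemma sum_path_norm_max_net:
  assumes "\<forall>b<2^\<alpha>. shallow_cost m (\<omega>s b) \<le> P b"
  shows "(\<Sum>a\<in>{1..2^\<alpha>}. path_norm mw (CARD('d) + 2 * 2^\<alpha>) (\<alpha> + 1) (max_net e m \<alpha> c \<omega>s (a - 1)))
    \<le> 2^\<alpha> * (6 * ((1 + \<bar>c\<bar>) * 4^\<alpha>) * (\<Sum>b<2^\<alpha>. P b))"
proof -
  have "path_norm mw (CARD('d) + 2 * 2^\<alpha>) (\<alpha> + 1) (max_net e m \<alpha> c \<omega>s (a - 1))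
      \<le> 6 * ((1 + \<bar>c\<bar>) * 4^\<alpha>) * (\<Sum>b<2^\<alpha>. P b)" if "a \<in> {1..2^\<alpha>}" for a
  proof -
    have "path_norm mw (CARD('d) + 2 * 2^\<alpha>) (\<alpha> + 1) (max_net e m \<alpha> c \<omega>s (a - 1))
        \<le> 6 * ((1 + \<bar>c\<bar>) * 4^\<alpha>) * (\<Sum>b<2^\<alpha>. shallow_cost m (\<omega>s b))"
      using that by (intro path_norm_max_net) auto
    also have "\<dots> \<le> 6 * ((1 + \<bar>c\<bar>) * 4^\<alpha>) * (\<Sum>b<2^\<alpha>. P b)"
      using assms by (intro mult_left_mono sum_mono) auto
    finally show ?thesis .
  qed
  then have "(\<Sum>a\<in>{1..2^\<alpha>}. path_norm mw (CARD('d) + 2 * 2^\<alpha>) (\<alpha> + 1) (max_net e m \<alpha> c \<omega>s (a - 1)))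
      \<le> of_nat (card {1..(2::nat)^\<alpha>}) * (6 * ((1 + \<bar>c\<bar>) * 4^\<alpha>) * (\<Sum>b<2^\<alpha>. P b))"
    by (rule sum_bounded_above)
  then show ?thesis
    by simp
qed


lemma bellman_loss_max_net_le:
  fixes S :: "(real^'d) set" and r :: "real^'d \<Rightarrow> nat \<Rightarrow> real" and g :: "nat \<Rightarrow> real^'d \<Rightarrow> real"
  assumes \<gamma>: "0 \<le> \<gamma>" "\<gamma> < 1" "c = \<gamma> / (1 - \<gamma>)" and S: "S \<in> sets borel"
    and g: "\<forall>b<2^\<alpha>. g b \<in> borel_measurable borel \<and> (\<forall>s\<in>S. g b s = r s (Suc b))"
    and err: "\<forall>b<2^\<alpha>. (\<integral>\<^sup>+s. ennreal ((shallow_net m (\<omega>s b) s - g b s)\<^sup>2) \<partial>uniform_measure lborel S)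
                  \<le> ennreal (8 * (N b)\<^sup>2 / m)"
    and N: "(\<Sum>b<2^\<alpha>. (N b)\<^sup>2) \<le> 9/4 * Q" "0 \<le> Q"
  shows "bellman_loss S {1..2^\<alpha>} \<gamma> mw (CARD('d) + 2 * 2^\<alpha>) (\<alpha> + 1) r (\<lambda>a. max_net e m \<alpha> c \<omega>s (a - 1))
    \<le> 32 / (1 - \<gamma>)\<^sup>2 * (2^\<alpha> + 1) * ((2^\<alpha>)^4 + 1) / m * Q"
proof -
  have "bellman_loss S {1..2^\<alpha>} \<gamma> mw (CARD('d) + 2 * 2^\<alpha>) (\<alpha> + 1) r (\<lambda>a. max_net e m \<alpha> c \<omega>s (a - 1))
      \<le> (\<Sum>b<2^\<alpha>. 8 * (N b)\<^sup>2 / real m) / (2 * 2^\<alpha>)"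
    using \<gamma> by (intro bellman_loss_max_net[OF \<gamma>(3) _ S g err]) auto
  also have "\<dots> = 4 * (\<Sum>b<2^\<alpha>. (N b)\<^sup>2) / (real m * 2^\<alpha>)"
    by (simp add: sum_divide_distrib[symmetric] sum_distrib_left[symmetric])
  also have "\<dots> \<le> 9 * Q / (real m * 2^\<alpha>)"
    using N(1) by (intro divide_right_mono) auto
  also have "\<dots> \<le> 32 / (1 - \<gamma>)\<^sup>2 * (2^\<alpha> + 1) * ((2^\<alpha>)^4 + 1) / m * Q"
    using loss_constant_le[of \<gamma> "real m" "2^\<alpha>" Q] \<gamma> m N(2) by simp
  finally show ?thesis .
qed

lemma sum_path_norm_max_net_le:
  assumes \<gamma>: "0 \<le> \<gamma>" "\<gamma> < 1" "c = \<gamma> / (1 - \<gamma>)"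
    and cost: "\<forall>b<2^\<alpha>. shallow_cost m (\<omega>s b) \<le> 8 * N b / 7"
    and N: "\<forall>b. 0 \<le> N b" "(\<Sum>b<2^\<alpha>. (N b)\<^sup>2) \<le> 9/4 * Q" "0 \<le> Q"
  shows "(\<Sum>a\<in>{1..2^\<alpha>}. path_norm mw (CARD('d) + 2 * 2^\<alpha>) (\<alpha> + 1) (max_net e m \<alpha> c \<omega>s (a - 1)))
    \<le> 12 / (1 - \<gamma>) * ((2^\<alpha>) powr (7/2) + (2^\<alpha>) powr (1/2)) * sqrt Q"
proof -
  have "(\<Sum>a\<in>{1..2^\<alpha>}. path_norm mw (CARD('d) + 2 * 2^\<alpha>) (\<alpha> + 1) (max_net e m \<alpha> c \<omega>s (a - 1)))
      \<le> 2^\<alpha> * (6 * ((1 + \<bar>c\<bar>) * 4^\<alpha>) * (\<Sum>b<2^\<alpha>. 8 * N b / 7))"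
    using cost by (rule sum_path_norm_max_net)
  also have "\<dots> = 2^\<alpha> * (6 * ((2^\<alpha>)\<^sup>2 / (1 - \<gamma>)) * (8/7 * (\<Sum>b<2^\<alpha>. N b)))"
  proof -
    have "1 + \<bar>c\<bar> = 1 / (1 - \<gamma>)"
      using \<gamma>(1,2) by (simp add: \<gamma>(3) field_simps)
    moreover have "(4::real)^\<alpha> = (2^\<alpha>)\<^sup>2"
      by (simp add: power2_eq_square flip: power_mult_distrib)
    ultimately show ?thesis
      by (simp add: sum_divide_distrib[symmetric] sum_distrib_left[symmetric])
  qed
  also have "\<dots> \<le> 12 / (1 - \<gamma>) * ((2^\<alpha>) powr (7/2) + (2^\<alpha>) powr (1/2)) * sqrt Q"
  proof (rule path_constant_le)
    have "(\<Sum>b<2^\<alpha>. N b) \<le> sqrt (2^\<alpha>) * sqrt (9/4 * Q)"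
      using sum_le_sqrt_card_mult[of N "2^\<alpha>" "9/4 * Q"] N by simp
    then show "(\<Sum>b<2^\<alpha>. N b) \<le> 3/2 * sqrt (2^\<alpha>) * sqrt Q"
      by (simp add: real_sqrt_mult real_sqrt_divide)
  qed (use \<gamma> N in auto)
  finally show ?thesis .
qed

end

lemma barron_norm_family_eq_top:
  assumes "finite A" "a \<in> A" "barron_norm S (\<lambda>s. r s a) = \<top>"
  shows "barron_norm_family S A r = \<top>"
proof -
  have "(\<Sum>a\<in>A. (barron_norm S (\<lambda>s. r s a))\<^sup>2) = \<top>"
    using assms by (subst ennreal_sum_eq_top) (auto simp: power2_eq_square ennreal_mult_top intro!: bexI[of _ a])
  then show ?thesis
    by (simp add: barron_norm_family_def enn_sqrt_def)
qed

lemma barron_norm_family_eq_sqrt: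
  assumes "\<forall>a\<in>A. barron_norm S (\<lambda>s. r s a) = ennreal (B a)" "\<forall>a. 0 \<le> B a"
  shows "barron_norm_family S A r = ennreal (sqrt (\<Sum>a\<in>A. (B a)\<^sup>2))"
proof -
  have "(\<Sum>a\<in>A. (barron_norm S (\<lambda>s. r s a))\<^sup>2) = ennreal (\<Sum>a\<in>A. (B a)\<^sup>2)"
    using assms by (simp add: ennreal_power)
  then show ?thesis
    by (simp add: barron_norm_family_def enn_sqrt_def sum_nonneg)
qed

lemma max_net_bellman_bounds:
  fixes S :: "(real^'d::finite) set" and r :: "real^'d \<Rightarrow> nat \<Rightarrow> real" and B :: "nat \<Rightarrow> real"
  assumes \<gamma>: "0 \<le> \<gamma>" "\<gamma> < 1" and m: "0 < m"
    and S: "compact S" "S \<subseteq> {x. \<forall>i. 0 \<le> x $ i \<and> x $ i \<le> 1}" "emeasure lborel S > 0"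
    and r: "\<forall>a\<in>{1..2^\<alpha>}. continuous_on S (\<lambda>s. r s a)"
    and B: "\<forall>a\<in>{1..2^\<alpha>}. barron_norm S (\<lambda>s. r s a) = ennreal (B a)" "\<forall>a. 0 \<le> B a"
  shows "\<exists>\<Theta> :: nat \<Rightarrow> 'd resnet.
    bellman_loss S {1..2^\<alpha>} \<gamma> ((6^\<alpha> + 1) * m) (CARD('d) + 2 * 2^\<alpha>) (\<alpha> + 1) r \<Theta>
      \<le> 32 / (1 - \<gamma>)\<^sup>2 * (2^\<alpha> + 1) * ((2^\<alpha>)^4 + 1) / m * (\<Sum>a\<in>{1..2^\<alpha>}. (B a)\<^sup>2)
    \<and> (\<Sum>a\<in>{1..2^\<alpha>}. path_norm ((6^\<alpha> + 1) * m) (CARD('d) + 2 * 2^\<alpha>) (\<alpha> + 1) (\<Theta> a))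
      \<le> 12 / (1 - \<gamma>) * ((2^\<alpha>) powr (7/2) + (2^\<alpha>) powr (1/2)) * sqrt (\<Sum>a\<in>{1..2^\<alpha>}. (B a)\<^sup>2)"
proof -
  define Q where "Q = (\<Sum>b<2^\<alpha>. (B (Suc b))\<^sup>2)"
  \<comment> \<open>the shift \<open>\<epsilon>\<close> makes the Barron norms strict upper bounds unless they all vanish\<close>
  define \<epsilon> where "\<epsilon> = sqrt (Q / (8 * 2^\<alpha>))"
  define g where "g b = (\<lambda>s. indicator S s *\<^sub>R r s (Suc b))" for b
  obtain e :: "'d \<Rightarrow> nat" where e: "bij_betw e UNIV {0..<CARD('d)}"
    using ex_bij_betw_finite_nat[of "UNIV :: 'd set"] by auto
  have mw: "2^\<alpha> * m \<le> (6^\<alpha> + 1) * m"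
    using power_mono[of "2::nat" 6 \<alpha>] by (intro mult_le_mono1) simp
  have Q: "0 \<le> Q" "(\<Sum>a\<in>{1..2^\<alpha>}. (B a)\<^sup>2) = Q"
    by (simp_all add: Q_def sum_nonneg sum.atLeast1_atMost_eq)
  have S_borel: "S \<in> sets borel"
    using S(1) by (simp add: borel_closed compact_imp_closed)
  have \<mu>: "prob_space (uniform_measure lborel S)" "sets (uniform_measure lborel S) = sets borel"
      "AE x in uniform_measure lborel S. x \<in> S"
    using S S_borel emeasure_bounded_finite[OF compact_imp_bounded[OF S(1)]]
    by (auto intro!: prob_space_uniform_measure AE_uniform_measureI)
  have g: "\<forall>b<2^\<alpha>. g b \<in> borel_measurable borel \<and> (\<forall>s\<in>S. g b s = r s (Suc b))"
  proof (intro allI impI conjI)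
    fix b :: nat
    assume "b < 2^\<alpha>"
    then have "continuous_on S (\<lambda>s. r s (Suc b))"
      using r by simp
    then show "g b \<in> borel_measurable borel"
      unfolding g_def by (rule borel_measurable_continuous_on_indicator[OF S_borel])
    show "\<forall>s\<in>S. g b s = r s (Suc b)"
      by (simp add: g_def)
  qed
  have \<epsilon>: "0 \<le> \<epsilon>" "\<epsilon> = 0 \<Longrightarrow> \<forall>b<2^\<alpha>. B (Suc b) = 0"
    using Q(1) B(2) by (auto simp: \<epsilon>_def Q_def sum_nonneg_eq_0_iff)
  have B': "\<forall>b<2^\<alpha>. barron_norm S (\<lambda>s. r s (Suc b)) = ennreal (B (Suc b))" "\<forall>b. 0 \<le> B (Suc b)"
    using B by simp_all
  obtain \<omega>s where \<omega>s: "\<forall>b<2^\<alpha>. (\<integral>\<^sup>+x. ennreal ((shallow_net m (\<omega>s b) x - g b x)\<^sup>2) \<partial>uniform_measure lborel S)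
        \<le> ennreal (8 * (B (Suc b) + \<epsilon>)\<^sup>2 / m)
      \<and> shallow_cost m (\<omega>s b) \<le> 8 * (B (Suc b) + \<epsilon>) / 7"
    using shallow_approximations[OF \<mu> S(2) g B' \<epsilon> m] by blast
  have N: "(\<Sum>b<2^\<alpha>. (B (Suc b) + \<epsilon>)\<^sup>2) \<le> 9/4 * Q"
    unfolding Q_def by (rule sum_sq_add_le) (use Q(1) in \<open>simp_all add: \<epsilon>_def Q_def\<close>)
  show ?thesis
    unfolding Q(2) using \<gamma> B(2) \<epsilon>(1) Q(1) N \<omega>s
    by (intro exI[of _ "\<lambda>a. max_net e m \<alpha> (\<gamma> / (1 - \<gamma>)) \<omega>s (a - 1)"] conjI
        bellman_loss_max_net_le[OF e m mw _ _ _ S_borel g] sum_path_norm_max_net_le[OF e m mw]) auto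
qed

lemma max_net_bellman_approximation:
  fixes S :: "(real^'d::finite) set" and r :: "real^'d \<Rightarrow> nat \<Rightarrow> real"
  assumes "0 \<le> \<gamma>" "\<gamma> < 1" "0 < m"
    and "compact S" "S \<subseteq> {x. \<forall>i. 0 \<le> x $ i \<and> x $ i \<le> 1}" "emeasure lborel S > 0"
    and "\<forall>a\<in>{1..2^\<alpha>}. continuous_on S (\<lambda>s. r s a)"
    and finite_norms: "\<forall>a\<in>{1..2^\<alpha>}. barron_norm S (\<lambda>s. r s a) \<noteq> \<top>"
  shows "\<exists>\<Theta> :: nat \<Rightarrow> 'd resnet.
    ennreal (bellman_loss S {1..2^\<alpha>} \<gamma> ((6^\<alpha> + 1) * m) (CARD('d) + 2 * 2^\<alpha>) (\<alpha> + 1) r \<Theta>)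
      \<le> ennreal (32 / (1 - \<gamma>)\<^sup>2 * (2^\<alpha> + 1) * ((2^\<alpha>)^4 + 1) / m) * (barron_norm_family S {1..2^\<alpha>} r)\<^sup>2
    \<and> ennreal (\<Sum>a\<in>{1..2^\<alpha>}. path_norm ((6^\<alpha> + 1) * m) (CARD('d) + 2 * 2^\<alpha>) (\<alpha> + 1) (\<Theta> a))
      \<le> ennreal (12 / (1 - \<gamma>) * ((2^\<alpha>) powr (7/2) + (2^\<alpha>) powr (1/2))) * barron_norm_family S {1..2^\<alpha>} r"
proof -
  define B where "B a = enn2real (barron_norm S (\<lambda>s. r s a))" for a
  define Q where "Q = (\<Sum>a\<in>{1..2^\<alpha>}. (B a)\<^sup>2)"
  have B: "\<forall>a\<in>{1..2^\<alpha>}. barron_norm S (\<lambda>s. r s a) = ennreal (B a)" "\<forall>a. 0 \<le> B a"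
    using finite_norms by (auto simp: B_def ennreal_enn2real_if)
  have Q: "0 \<le> Q" "barron_norm_family S {1..2^\<alpha>} r = ennreal (sqrt Q)"
    unfolding Q_def using barron_norm_family_eq_sqrt[OF B] by (simp_all add: sum_nonneg)
  have "0 \<le> 32 / (1 - \<gamma>)\<^sup>2 * (2^\<alpha> + 1) * ((2^\<alpha>)^4 + 1) / m"
      "0 \<le> 12 / (1 - \<gamma>) * ((2^\<alpha>) powr (7/2) + (2^\<alpha>) powr (1/2))"
    using assms(2) by simp_all
  with Q show ?thesis
    using max_net_bellman_bounds[OF assms(1-7) B] unfolding Q_def[symmetric]
    by (auto simp: ennreal_power simp flip: ennreal_mult' intro: ennreal_leI)
qed

theorem proposition3p4:
  fixes S :: "(real^'d) set" and r :: "real^'d \<Rightarrow> nat \<Rightarrow> real"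
    and \<gamma> :: real and m \<alpha> :: nat
  assumes "0 < \<gamma>" and "\<gamma> < 1" and "0 < m"
    and "compact S" and "S \<subseteq> {x. \<forall>i. 0 \<le> x $ i \<and> x $ i \<le> 1}"
    and "emeasure lborel S > 0"
    and "\<forall>a\<in>{1..2^\<alpha>}. continuous_on S (\<lambda>s. r s a) \<and> in_barron S (\<lambda>s. r s a)"
    and "\<forall>s\<in>S. \<forall>a\<in>{1..2^\<alpha>}. \<bar>r s a\<bar> \<le> 1"
  shows "\<exists>D0 > 0. \<exists>\<Theta> :: nat \<Rightarrow> 'd resnet.
    ennreal (bellman_loss S {1..2^\<alpha>} \<gamma> ((6^\<alpha> + 1) * m) D0 (\<alpha> + 1) r \<Theta>)
      \<le> ennreal (32 / (1 - \<gamma>)^2 * (real (card {1..(2::nat)^\<alpha>}) + 1)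
                 * (real (card {1..(2::nat)^\<alpha>}) ^ 4 + 1) / real m)
        * (barron_norm_family S {1..2^\<alpha>} r)\<^sup>2
    \<and> ennreal (\<Sum>a\<in>{1..2^\<alpha>}. path_norm ((6^\<alpha> + 1) * m) D0 (\<alpha> + 1) (\<Theta> a))
      \<le> ennreal (12 / (1 - \<gamma>) * (real (card {1..(2::nat)^\<alpha>}) powr (7/2)
                 + real (card {1..(2::nat)^\<alpha>}) powr (1/2)))
        * barron_norm_family S {1..2^\<alpha>} r"
proof (cases "\<exists>a\<in>{1..(2::nat)^\<alpha>}. barron_norm S (\<lambda>s. r s a) = \<top>")
  case True
  then have top: "barron_norm_family S {1..2^\<alpha>} r = \<top>"
    using barron_norm_family_eq_top[of "{1..2^\<alpha>}"] by blast
  have le_top: "x \<le> ennreal c * \<top>" if "0 < c" for x :: ennreal and c :: real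
    using that by (simp add: ennreal_mult_top)
  show ?thesis
    unfolding top using assms(2,3)
    by (intro exI[of _ "1::nat"] exI conjI) (auto intro!: le_top divide_pos_pos mult_pos_pos add_pos_pos)
next
  case False
  then show ?thesis
    using max_net_bellman_approximation[of \<gamma> m S \<alpha> r] assms
    by (intro exI[of _ "CARD('d) + 2 * 2^\<alpha>"]) auto
qed

end
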